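(* Let $K$ be a field and $m,n,r$ positive integers. Let $R=K[x_{ij}^k \mid 1\le i\le m,\ 1\le j\le n,\ 1\le k\le r]$ and let $I_{mn}^r$ be the ideal generated by all $2$-minors of the horizontal and of the vertical concatenation of the $m\times n$ matrices $X_k=(x_{ij}^k)$, $k=1,\dots,r$. Let $P_{mnr}$ be the poset which is the disjoint union of three pairwise incomparable chains of cardinalities $m-1$, $n-1$, $r-1$, with a natural labeling $P_{mnr}=\{p_1,\dots,p_{N}\}$, $N=m+n+r-3$ (i.e. $p_i\prec p_j$ implies $i<j$). Then the $h$-polynomial of $R/I_{mn}^r$ equals $\sum_{w\in\mathcal L(P_{mnr})}t^{\operatorname{des}(w)}$.
   Context: $\mathcal L(P)$ is the set of linear extensions of $P$, i.e. bijections $w:P\to\{1,\dots,|P|\}$ with $p\preceq q\Rightarrow w(p)\le w(q)$. A descent of $w$ is an index $i$ such that $w(p_j)=i$ and $w(p_k)=i+1$ with $j>k$; $\operatorname{des}(w)$ is the number of descents. The $h$-polynomial of a standard graded algebra $A$ is the numerator of its Hilbert series written in reduced form $h(t)/(1-t)^{\dim A}$. *)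

theory Defs
  imports Main "HOL-Library.Poly_Mapping" "HOL-Computational_Algebra.Polynomial_FPS"
begin

text \<open>Variables are indexed by triples (i,j,k), standing for x_{ij}^k.\<close>

type_synonym 'a mpoly3 = "((nat \<times> nat \<times> nat) \<Rightarrow>\<^sub>0 nat) \<Rightarrow>\<^sub>0 'a"

definition var3 :: "nat \<Rightarrow> nat \<Rightarrow> nat \<Rightarrow> 'a::field mpoly3" where
  "var3 i j k = Poly_Mapping.single (Poly_Mapping.single (i, j, k) 1) 1"

definition cscale :: "'a::field \<Rightarrow> 'a mpoly3 \<Rightarrow> 'a mpoly3" where
  "cscale c p = Poly_Mapping.single 0 c * p"

definition vars3 :: "nat \<Rightarrow> nat \<Rightarrow> nat \<Rightarrow> (nat \<times> nat \<times> nat) set" where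
  "vars3 m n r = {(i, j, k). 1 \<le> i \<and> i \<le> m \<and> 1 \<le> j \<and> j \<le> n \<and> 1 \<le> k \<and> k \<le> r}"

definition ringR :: "nat \<Rightarrow> nat \<Rightarrow> nat \<Rightarrow> 'a::field mpoly3 set" where
  "ringR m n r = {p. \<forall>a \<in> Poly_Mapping.keys p. Poly_Mapping.keys a \<subseteq> vars3 m n r}"

definition homog :: "nat \<Rightarrow> nat \<Rightarrow> nat \<Rightarrow> nat \<Rightarrow> 'a::field mpoly3 set" where
  "homog m n r d = {p \<in> ringR m n r. \<forall>a \<in> Poly_Mapping.keys p. (\<Sum>v\<in>Poly_Mapping.keys a. Poly_Mapping.lookup a v) = d}"

definition ideal_gen :: "nat \<Rightarrow> nat \<Rightarrow> nat \<Rightarrow> 'a::field mpoly3 set \<Rightarrow> 'a mpoly3 set" where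
  "ideal_gen m n r G = {(\<Sum>g\<in>F. c g * g) | F c. finite F \<and> F \<subseteq> G \<and> (\<forall>g\<in>F. c g \<in> ringR m n r)}"

text \<open>Horizontal concatenation [X_1 | ... | X_r]: an m x (nr) matrix whose column (k,j)
  in row i is x_{ij}^k. Vertical concatenation: an (mr) x n matrix whose row (k,i)
  in column j is x_{ij}^k. A 2-minor uses two distinct rows and two distinct columns.\<close>
definition hminors :: "nat \<Rightarrow> nat \<Rightarrow> nat \<Rightarrow> 'a::field mpoly3 set" where
  "hminors m n r = {var3 i j k * var3 i' j' k' - var3 i j' k' * var3 i' j k | i i' j j' k k'.
     1 \<le> i \<and> i < i' \<and> i' \<le> m \<and> 1 \<le> j \<and> j \<le> n \<and> 1 \<le> j' \<and> j' \<le> n \<and>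
     1 \<le> k \<and> k \<le> r \<and> 1 \<le> k' \<and> k' \<le> r \<and> (k < k' \<or> (k = k' \<and> j < j'))}"

definition vminors :: "nat \<Rightarrow> nat \<Rightarrow> nat \<Rightarrow> 'a::field mpoly3 set" where
  "vminors m n r = {var3 i j k * var3 i' j' k' - var3 i j' k * var3 i' j k' | i i' j j' k k'.
     1 \<le> i \<and> i \<le> m \<and> 1 \<le> i' \<and> i' \<le> m \<and> 1 \<le> j \<and> j < j' \<and> j' \<le> n \<and>
     1 \<le> k \<and> k \<le> r \<and> 1 \<le> k' \<and> k' \<le> r \<and> (k < k' \<or> (k = k' \<and> i < i'))}"

definition Imnr :: "nat \<Rightarrow> nat \<Rightarrow> nat \<Rightarrow> 'a::field mpoly3 set" where
  "Imnr m n r = ideal_gen m n r (hminors m n r \<union> vminors m n r)"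

definition hilb_fun :: "'a::field itself \<Rightarrow> nat \<Rightarrow> nat \<Rightarrow> nat \<Rightarrow> nat \<Rightarrow> nat" where
  "hilb_fun (TYPE('a)) m n r d =
     vector_space.dim (cscale :: 'a \<Rightarrow> 'a mpoly3 \<Rightarrow> 'a mpoly3) (homog m n r d)
     - vector_space.dim (cscale :: 'a \<Rightarrow> 'a mpoly3 \<Rightarrow> 'a mpoly3) (Imnr m n r \<inter> homog m n r d)"

definition hilb_series :: "'a::field itself \<Rightarrow> nat \<Rightarrow> nat \<Rightarrow> nat \<Rightarrow> int fps" where
  "hilb_series T m n r = Abs_fps (\<lambda>d. int (hilb_fun T m n r d))"

text \<open>Model of the poset: disjoint union of three chains of sizes m-1, n-1, r-1,
  elements (c, t) with c the chain and t < size of chain c.\<close>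
definition chain_sizes :: "nat \<Rightarrow> nat \<Rightarrow> nat \<Rightarrow> nat \<Rightarrow> nat" where
  "chain_sizes m n r c = (if c = 0 then m - 1 else if c = 1 then n - 1 else r - 1)"

definition chains_carrier :: "nat \<Rightarrow> nat \<Rightarrow> nat \<Rightarrow> (nat \<times> nat) set" where
  "chains_carrier m n r = {(c, t). c < 3 \<and> t < chain_sizes m n r c}"

definition chains_le :: "nat \<times> nat \<Rightarrow> nat \<times> nat \<Rightarrow> bool" where
  "chains_le x y \<longleftrightarrow> fst x = fst y \<and> snd x \<le> snd y"

definition natural_labeling :: "nat \<Rightarrow> nat \<Rightarrow> nat \<Rightarrow> (nat \<Rightarrow> nat \<times> nat) \<Rightarrow> bool" where
  "natural_labeling m n r \<phi> \<longleftrightarrow>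
     bij_betw \<phi> {1..m + n + r - 3} (chains_carrier m n r) \<and>
     (\<forall>i\<in>{1..m + n + r - 3}. \<forall>j\<in>{1..m + n + r - 3}. chains_le (\<phi> i) (\<phi> j) \<longrightarrow> i \<le> j)"

text \<open>Linear extensions, with elements identified with their labels 1..N:
  bijections w from {1..N} to {1..N} with p_i below p_j implying w i \<le> w j.\<close>
definition lin_ext :: "nat \<Rightarrow> nat \<Rightarrow> nat \<Rightarrow> (nat \<Rightarrow> nat \<times> nat) \<Rightarrow> (nat \<Rightarrow> nat) set" where
  "lin_ext m n r \<phi> = {w. bij_betw w {1..m + n + r - 3} {1..m + n + r - 3} \<and>
     (\<forall>i. i \<notin> {1..m + n + r - 3} \<longrightarrow> w i = 0) \<and>
     (\<forall>i\<in>{1..m + n + r - 3}. \<forall>j\<in>{1..m + n + r - 3}. chains_le (\<phi> i) (\<phi> j) \<longrightarrow> w i \<le> w j)}"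

definition des :: "nat \<Rightarrow> (nat \<Rightarrow> nat) \<Rightarrow> nat" where
  "des N w = card {i. \<exists>j k. j \<in> {1..N} \<and> k \<in> {1..N} \<and> w j = i \<and> w k = i + 1 \<and> j > k}"

end

theory Submission
  imports Defs "HOL-Library.Multiset" "HOL-Library.Product_Lexorder"
begin

(* In each degree d, the generators of the ideal exchange the row indices, or the column indices,
   of two variables of a monomial. Such exchanges connect any two monomials with the same
   marginals, i.e. the same multisets of row, column and layer indices, while summing the
   coefficients over a fixed marginal is a linear functional vanishing on the ideal. So the
   Hilbert function of R/I counts triples of multisets of size d, and equals
   C(d+m-1, m-1) C(d+n-1, n-1) C(d+r-1, r-1), the number of order-preserving maps from P_mnr
   to the chain {0..d}. Stanley's theory of P-partitions writes this number as the sum over the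
   linear extensions w of C(d + N - des w, N), and multiplying the Hilbert series by (1-t)^(N+1)
   turns each such term into t^(des w). *)

section \<open>Counting weakly increasing sequences\<close>

lemma card_sorted_bounded_lists:
  "card {xs::nat list. sorted xs \<and> length xs = L \<and> set xs \<subseteq> {..e}} = (e + L) choose L"
proof -
  have "bij_betw mset {xs::nat list. sorted xs \<and> length xs = L \<and> set xs \<subseteq> {..e}}
          (multisets_of_size {..e} L)"
  proof (rule bij_betw_byWitness[where f' = sorted_list_of_multiset])
    show "mset ` {xs. sorted xs \<and> length xs = L \<and> set xs \<subseteq> {..e}} \<subseteq> multisets_of_size {..e} L"
      by (auto simp: multisets_of_size_def)
    show "sorted_list_of_multiset ` multisets_of_size {..e} L
        \<subseteq> {xs. sorted xs \<and> length xs = L \<and> set xs \<subseteq> {..e}}"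
      by (auto simp: multisets_of_size_def simp flip: size_mset)
  qed (simp_all add: sorted_sort_id)
  then show ?thesis
    by (simp add: bij_betw_same_card card_multisets_of_size)
qed

text \<open>For \<open>D\<close> the descent set of a linear extension \<open>w\<close>, these are Stanley's
  \<open>w\<close>-compatible sequences.\<close>

definition compatible_seqs :: "nat \<Rightarrow> nat \<Rightarrow> nat set \<Rightarrow> (nat \<Rightarrow> nat) set" where
  "compatible_seqs N d D = {g. (\<forall>s. s \<notin> {1..N} \<longrightarrow> g s = 0) \<and> (\<forall>s\<in>{1..N}. g s \<le> d) \<and>
      (\<forall>s\<in>{1..<N}. g s \<le> g (Suc s)) \<and> (\<forall>s\<in>D. g s < g (Suc s))}"

lemma compatible_seqs_mono:
  assumes "g \<in> compatible_seqs N d D" "1 \<le> s" "s \<le> t" "t \<le> N"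
  shows "g s \<le> g t"
  by (rule lift_Suc_mono_le_ivl[where N = "{1..<N}"]) (use assms in \<open>auto simp: compatible_seqs_def\<close>)

lemma card_compatible_seqs_empty: "card (compatible_seqs N d {}) = (d + N) choose N"
proof -
  let ?lists = "{xs::nat list. sorted xs \<and> length xs = N \<and> set xs \<subseteq> {..d}}"
  have "bij_betw (\<lambda>g. map g [1..<Suc N]) (compatible_seqs N d {}) ?lists"
  proof (rule bij_betw_byWitness[where f' = "\<lambda>xs s. if s \<in> {1..N} then xs ! (s - 1) else 0"])
    show "\<forall>g\<in>compatible_seqs N d {}. (\<lambda>s. if s \<in> {1..N} then map g [1..<Suc N] ! (s - 1) else 0) = g"
      by (auto intro!: ext simp: compatible_seqs_def nth_map_upt simp del: upt_Suc)
    show "\<forall>xs\<in>?lists. map (\<lambda>s. if s \<in> {1..N} then xs ! (s - 1) else 0) [1..<Suc N] = xs"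
      by (auto intro!: nth_equalityI simp: nth_map_upt simp del: upt_Suc)
    show "(\<lambda>g. map g [1..<Suc N]) ` compatible_seqs N d {} \<subseteq> ?lists"
    proof clarify
      fix g assume g: "g \<in> compatible_seqs N d {}"
      then have "mono_on {1..N} g"
        by (intro mono_onI) (auto elim: compatible_seqs_mono)
      then have "sorted (map g [1..<Suc N])"
        by (intro sorted_map_mono) (simp_all add: atLeastLessThanSuc_atLeastAtMost del: upt_Suc)
      then show "sorted (map g [1..<Suc N]) \<and> length (map g [1..<Suc N]) = N \<and>
          set (map g [1..<Suc N]) \<subseteq> {..d}"
        using g by (auto simp: compatible_seqs_def simp del: upt_Suc)
    qed
    show "(\<lambda>xs s. if s \<in> {1..N} then xs ! (s - 1) else 0) ` ?lists \<subseteq> compatible_seqs N d {}"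
    proof (rule image_subsetI)
      fix xs assume "xs \<in> ?lists"
      then have xs: "sorted xs" "length xs = N" "set xs \<subseteq> {..d}" by auto
      have "xs ! (s - 1) \<le> d" if "s \<in> {1..N}" for s
      proof -
        have "s - 1 < length xs" using xs(2) that by auto
        then show ?thesis using xs(3) nth_mem by fastforce
      qed
      moreover have "xs ! (s - 1) \<le> xs ! s" if "s \<in> {1..<N}" for s
        using xs that by (intro sorted_nth_mono) auto
      ultimately show "(\<lambda>s. if s \<in> {1..N} then xs ! (s - 1) else 0) \<in> compatible_seqs N d {}"
        by (auto simp: compatible_seqs_def)
    qed
  qed
  then show ?thesis
    using card_sorted_bounded_lists[of N d] by (simp add: bij_betw_same_card)
qed

definition card_below :: "nat set \<Rightarrow> nat \<Rightarrow> nat" where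
  "card_below D s = card (D \<inter> {1..<s})"

lemma card_below_Suc: "card_below D (Suc s) = card_below D s + (if s \<in> D \<and> 1 \<le> s then 1 else 0)"
proof -
  have "D \<inter> {1..<Suc s} = (D \<inter> {1..<s}) \<union> (if s \<in> D \<and> 1 \<le> s then {s} else {})"
    by (auto simp: less_Suc_eq)
  then show ?thesis unfolding card_below_def by auto
qed

lemma card_below_le: "D \<subseteq> {1..<N} \<Longrightarrow> card_below D s \<le> card D"
  unfolding card_below_def by (intro card_mono) (auto intro: finite_subset)

lemma card_below_eq_card: "D \<subseteq> {1..<N} \<Longrightarrow> card_below D N = card D"
  unfolding card_below_def by (simp add: Int_absorb2)

lemma compatible_seqs_ge_card_below:
  assumes "g \<in> compatible_seqs N d D" "s \<in> {1..N}"
  shows "card_below D s \<le> g s"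
  using assms(2)
proof (induction s)
  case (Suc s)
  show ?case
  proof (cases "s = 0")
    case False
    then have "s \<in> {1..<N}" using Suc.prems by auto
    then have "card_below D s \<le> g s" "g s \<le> g (Suc s)" "s \<in> D \<Longrightarrow> g s < g (Suc s)"
      using Suc.IH assms(1) unfolding compatible_seqs_def by auto
    then show ?thesis by (auto simp: card_below_Suc)
  qed (simp add: card_below_def)
qed simp

lemma compatible_seqs_shift_down:
  assumes D: "D \<subseteq> {1..<N}" and g: "g \<in> compatible_seqs N d D"
  shows "(\<lambda>s. g s - card_below D s) \<in> compatible_seqs N (d - card D) {}"
proof -
  have steps: "g s - card_below D s \<le> g (Suc s) - card_below D (Suc s)" if "s \<in> {1..<N}" for s
  proof -
    have "g s \<le> g (Suc s)" "s \<in> D \<Longrightarrow> g s < g (Suc s)"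
      using g that by (auto simp: compatible_seqs_def)
    then show ?thesis
      using that compatible_seqs_ge_card_below[OF g, of s] by (auto simp: card_below_Suc)
  qed
  have "g s - card_below D s \<le> g N - card_below D N" if "s \<in> {1..N}" for s
    by (rule lift_Suc_mono_le_ivl[where N = "{1..<N}"]) (use that steps in auto)
  moreover have "g N \<le> d" if "N \<ge> 1" using g that by (auto simp: compatible_seqs_def)
  ultimately have "g s - card_below D s \<le> d - card D" if "s \<in> {1..N}" for s
    using that card_below_eq_card[OF D] by fastforce
  then show ?thesis
    using steps g by (auto simp: compatible_seqs_def)
qed

lemma compatible_seqs_shift_up:
  assumes D: "D \<subseteq> {1..<N}" "card D \<le> d" and h: "h \<in> compatible_seqs N (d - card D) {}"
  shows "(\<lambda>s. if s \<in> {1..N} then h s + card_below D s else 0) \<in> compatible_seqs N d D"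
proof -
  have "h s \<le> d - card D" if "s \<in> {1..N}" for s
    using h that by (auto simp: compatible_seqs_def)
  then have "h s + card_below D s \<le> d" if "s \<in> {1..N}" for s
    using that D card_below_le[OF D(1), of s] by fastforce
  moreover have "h s \<le> h (Suc s)" if "s \<in> {1..<N}" for s
    using h that by (auto simp: compatible_seqs_def)
  ultimately show ?thesis
    using D(1) by (fastforce simp: compatible_seqs_def card_below_Suc)
qed

text \<open>Subtracting \<open>card_below D\<close> turns the strict ascents at \<open>D\<close> into weak ones.\<close>

lemma card_compatible_seqs:
  assumes D: "D \<subseteq> {1..<N}"
  shows "card (compatible_seqs N d D) = (d + N - card D) choose N"
proof (cases "card D \<le> d")
  case False
  have "compatible_seqs N d D = {}"
  proof (rule ccontr)
    assume "compatible_seqs N d D \<noteq> {}"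
    then obtain g where g: "g \<in> compatible_seqs N d D" by auto
    have "N \<ge> 1" using False D by (cases N) auto
    then have "card D \<le> g N" "g N \<le> d"
      using compatible_seqs_ge_card_below[OF g, of N] card_below_eq_card[OF D] g
      by (auto simp: compatible_seqs_def)
    then show False using False by simp
  qed
  moreover have "card D \<le> card {1..<N}" using D by (intro card_mono) auto
  then have "d + N - card D < N" using False by simp
  ultimately show ?thesis by simp
next
  case True
  have "bij_betw (\<lambda>g s. g s - card_below D s) (compatible_seqs N d D) (compatible_seqs N (d - card D) {})"
  proof (rule bij_betw_byWitness[where f' = "\<lambda>h s. if s \<in> {1..N} then h s + card_below D s else 0"])
    show "\<forall>g\<in>compatible_seqs N d D.
        (\<lambda>s. if s \<in> {1..N} then g s - card_below D s + card_below D s else 0) = g"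
      using compatible_seqs_ge_card_below by (fastforce simp: compatible_seqs_def)
  qed (use compatible_seqs_shift_down[OF D] compatible_seqs_shift_up[OF D True] in
       \<open>auto simp: compatible_seqs_def\<close>)
  then have "card (compatible_seqs N d D) = card (compatible_seqs N (d - card D) {})"
    by (rule bij_betw_same_card)
  with True show ?thesis by (simp add: card_compatible_seqs_empty)
qed

section \<open>Order-preserving maps and linear extensions\<close>

definition order_preserving_maps :: "'a set \<Rightarrow> ('a \<Rightarrow> 'a \<Rightarrow> bool) \<Rightarrow> nat \<Rightarrow> ('a \<Rightarrow> nat) set" where
  "order_preserving_maps S le d = {f. (\<forall>x. x \<notin> S \<longrightarrow> f x = 0) \<and> (\<forall>x\<in>S. f x \<le> d) \<and>
     (\<forall>x\<in>S. \<forall>y\<in>S. le x y \<longrightarrow> f x \<le> f y)}"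

definition linear_extensions :: "nat \<Rightarrow> (nat \<Rightarrow> nat \<Rightarrow> bool) \<Rightarrow> (nat \<Rightarrow> nat) set" where
  "linear_extensions N le = {w. bij_betw w {1..N} {1..N} \<and> (\<forall>i. i \<notin> {1..N} \<longrightarrow> w i = 0) \<and>
     (\<forall>i\<in>{1..N}. \<forall>j\<in>{1..N}. le i j \<longrightarrow> w i \<le> w j)}"

definition descent_set :: "nat \<Rightarrow> (nat \<Rightarrow> nat) \<Rightarrow> nat set" where
  "descent_set N w = {i. \<exists>j k. j \<in> {1..N} \<and> k \<in> {1..N} \<and> w j = i \<and> w k = i + 1 \<and> j > k}"

lemma des_eq_card_descent_set: "des N w = card (descent_set N w)"
  by (simp add: des_def descent_set_def)

lemma descent_set_subset:
  assumes "bij_betw w {1..N} {1..N}"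
  shows "descent_set N w \<subseteq> {1..<N}"
proof
  fix i assume "i \<in> descent_set N w"
  then obtain j k where "j \<in> {1..N}" "k \<in> {1..N}" "w j = i" "w k = i + 1"
    unfolding descent_set_def by auto
  with bij_betwE[OF assms] have "i \<in> {1..N}" "i + 1 \<in> {1..N}" by metis+
  then show "i \<in> {1..<N}" by auto
qed

lemma finite_bounded_maps:
  assumes "finite S"
  shows "finite {f::'a \<Rightarrow> nat. (\<forall>x. x \<notin> S \<longrightarrow> f x = 0) \<and> (\<forall>x\<in>S. f x \<le> d)}"
proof -
  have "{f. (\<forall>x. x \<notin> S \<longrightarrow> f x = 0) \<and> (\<forall>x\<in>S. f x \<le> d)}
        \<subseteq> (\<lambda>h x. if x \<in> S then h x else 0) ` (PiE S (\<lambda>_. {..d}))"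
  proof
    fix f :: "'a \<Rightarrow> nat" assume f: "f \<in> {f. (\<forall>x. x \<notin> S \<longrightarrow> f x = 0) \<and> (\<forall>x\<in>S. f x \<le> d)}"
    then have "f = (\<lambda>x. if x \<in> S then restrict f S x else 0)" "restrict f S \<in> PiE S (\<lambda>_. {..d})"
      by auto
    then show "f \<in> (\<lambda>h x. if x \<in> S then h x else 0) ` (PiE S (\<lambda>_. {..d}))" by blast
  qed
  moreover have "finite (PiE S (\<lambda>_. {..d}))" using assms by (intro finite_PiE) auto
  ultimately show ?thesis by (meson finite_imageI finite_subset)
qed

lemma finite_compatible_seqs: "finite (compatible_seqs N d D)"
  by (rule finite_subset[OF _ finite_bounded_maps[of "{1..N}" d]]) (auto simp: compatible_seqs_def)

lemma finite_linear_extensions: "finite (linear_extensions N le)"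
  by (rule finite_subset[OF _ finite_bounded_maps[of "{1..N}" N]])
     (auto simp: linear_extensions_def bij_betw_def)

definition rank :: "nat \<Rightarrow> (nat \<Rightarrow> 'b::linorder) \<Rightarrow> nat \<Rightarrow> nat" where
  "rank N \<kappa> i = (if i \<in> {1..N} then card {j\<in>{1..N}. \<kappa> j < \<kappa> i} + 1 else 0)"

lemma rank_less:
  assumes "i \<in> {1..N}" "j \<in> {1..N}" "\<kappa> i < \<kappa> j"
  shows "rank N \<kappa> i < rank N \<kappa> j"
proof -
  have "{k\<in>{1..N}. \<kappa> k < \<kappa> i} \<subset> {k\<in>{1..N}. \<kappa> k < \<kappa> j}"
    using assms by auto
  then have "card {k\<in>{1..N}. \<kappa> k < \<kappa> i} < card {k\<in>{1..N}. \<kappa> k < \<kappa> j}"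
    by (intro psubset_card_mono) auto
  then show ?thesis using assms by (simp add: rank_def)
qed

lemma rank_less_iff:
  assumes "inj_on \<kappa> {1..N}" "i \<in> {1..N}" "j \<in> {1..N}"
  shows "rank N \<kappa> i < rank N \<kappa> j \<longleftrightarrow> \<kappa> i < \<kappa> j"
  using rank_less[of i N j \<kappa>] rank_less[of j N i \<kappa>] assms
  by (metis inj_on_contraD less_asym' linorder_neqE)

lemma rank_bij:
  assumes inj: "inj_on \<kappa> {1..N}"
  shows "bij_betw (rank N \<kappa>) {1..N} {1..N}"
proof -
  have "rank N \<kappa> i \<in> {1..N}" if i: "i \<in> {1..N}" for i
  proof -
    have "card {j\<in>{1..N}. \<kappa> j < \<kappa> i} \<le> card ({1..N} - {i})"
      by (intro card_mono) auto
    then show ?thesis using i by (auto simp: rank_def)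
  qed
  then have sub: "rank N \<kappa> ` {1..N} \<subseteq> {1..N}" by auto
  have inj_rank: "inj_on (rank N \<kappa>) {1..N}"
    by (intro inj_onI) (metis rank_less_iff[OF inj] less_irrefl linorder_neqE inj_onD[OF inj])
  then show ?thesis
    using endo_inj_surj[OF _ sub inj_rank] by (simp add: bij_betw_def)
qed

lemma rank_eq_perm:
  assumes w: "bij_betw w {1..N} {1..N}" "\<forall>i. i \<notin> {1..N} \<longrightarrow> w i = 0"
    and order: "\<And>i j. i \<in> {1..N} \<Longrightarrow> j \<in> {1..N} \<Longrightarrow> w i < w j \<Longrightarrow> \<kappa> i < \<kappa> j"
  shows "rank N \<kappa> = w"
proof
  fix i show "rank N \<kappa> i = w i"
  proof (cases "i \<in> {1..N}")
    case i: True
    have inj_w: "inj_on w {1..N}"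
      using w(1) by (rule bij_betw_imp_inj_on)
    have wi: "w i \<in> {1..N}"
      using bij_betwE[OF w(1)] i by blast
    have "\<kappa> j < \<kappa> i \<longleftrightarrow> w j < w i" if j: "j \<in> {1..N}" for j
    proof
      assume less: "\<kappa> j < \<kappa> i"
      show "w j < w i"
      proof (rule ccontr)
        assume "\<not> w j < w i"
        then have "w i < w j \<or> w i = w j" by auto
        then show False
          using order[OF i j] inj_onD[OF inj_w _ i j] less by auto
      qed
    qed (rule order[OF j i])
    then have "{j\<in>{1..N}. \<kappa> j < \<kappa> i} = {j\<in>{1..N}. w j < w i}" by auto
    moreover have "card {j\<in>{1..N}. w j < w i} = w i - 1"
    proof -
      have "w ` {j\<in>{1..N}. w j < w i} = {s\<in>w ` {1..N}. s < w i}" by blast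
      also have "\<dots> = {1..<w i}"
        using w(1) wi by (auto simp: bij_betw_def)
      finally show ?thesis
        by (metis (no_types, lifting) card_atLeastLessThan card_image inj_on_subset[OF inj_w] mem_Collect_eq subsetI)
    qed
    ultimately show ?thesis using i wi by (simp add: rank_def)
  qed (simp add: rank_def w(2))
qed

text \<open>The linear extension that Stanley attaches to \<open>f\<close>: the labels listed by increasing value
  of \<open>f\<close>, ties broken by the label.\<close>

definition sorting_perm :: "nat \<Rightarrow> (nat \<Rightarrow> nat) \<Rightarrow> nat \<Rightarrow> nat" where
  "sorting_perm N f = rank N (\<lambda>i. (f i, i))"

definition sorted_values :: "nat \<Rightarrow> (nat \<Rightarrow> nat) \<Rightarrow> nat \<Rightarrow> nat" where
  "sorted_values N f s = (if s \<in> {1..N} then f (inv_into {1..N} (sorting_perm N f) s) else 0)"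

lemma sorting_perm_bij: "bij_betw (sorting_perm N f) {1..N} {1..N}"
  unfolding sorting_perm_def by (rule rank_bij) (auto intro: inj_onI)

lemma sorting_perm_less_iff:
  assumes "i \<in> {1..N}" "j \<in> {1..N}"
  shows "sorting_perm N f i < sorting_perm N f j \<longleftrightarrow> f i < f j \<or> f i = f j \<and> i < j"
  unfolding sorting_perm_def using assms
  by (subst rank_less_iff) (auto intro: inj_onI simp: less_prod_def)

lemma sorting_perm_in_linear_extensions:
  assumes f: "f \<in> order_preserving_maps {1..N} le d"
    and natural: "\<forall>i\<in>{1..N}. \<forall>j\<in>{1..N}. le i j \<longrightarrow> i \<le> j"
  shows "sorting_perm N f \<in> linear_extensions N le"
proof -
  have "sorting_perm N f i \<le> sorting_perm N f j" if ij: "i \<in> {1..N}" "j \<in> {1..N}" "le i j" for i j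
  proof (cases "i = j")
    case False
    with ij natural have "i < j" by fastforce
    moreover have "f i \<le> f j" using f ij by (auto simp: order_preserving_maps_def)
    ultimately show ?thesis using sorting_perm_less_iff[OF ij(1,2), of f] by auto
  qed simp
  moreover have "sorting_perm N f i = 0" if "i \<notin> {1..N}" for i
    using that by (simp add: sorting_perm_def rank_def)
  ultimately show ?thesis
    using sorting_perm_bij by (auto simp: linear_extensions_def)
qed

lemma sorted_values_in_compatible_seqs:
  assumes f: "f \<in> order_preserving_maps {1..N} le d"
  shows "sorted_values N f \<in> compatible_seqs N d (descent_set N (sorting_perm N f))"
proof -
  let ?w = "sorting_perm N f"
  let ?u = "inv_into {1..N} ?w"
  have u: "?u s \<in> {1..N}" "?w (?u s) = s" if "s \<in> {1..N}" for s
    using that bij_betw_inv_into_right[OF sorting_perm_bij] bij_betwE[OF bij_betw_inv_into[OF sorting_perm_bij]]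
    by blast+
  have "f (?u s) \<le> f (?u (Suc s))" if "s \<in> {1..<N}" for s
    using sorting_perm_less_iff[of "?u s" N "?u (Suc s)" f] u[of s] u[of "Suc s"] that by auto
  moreover have "f (?u s) < f (?u (Suc s))" if s: "s \<in> descent_set N ?w" for s
  proof -
    obtain j k where jk: "j \<in> {1..N}" "k \<in> {1..N}" "?w j = s" "?w k = s + 1" "j > k"
      using s unfolding descent_set_def by blast
    have "?u (?w j) = j" "?u (?w k) = k"
      using bij_betw_inv_into_left[OF sorting_perm_bij] jk(1,2) by blast+
    with jk(3,4) have "?u s = j" "?u (Suc s) = k" by simp_all
    with jk show ?thesis using sorting_perm_less_iff[OF jk(1,2), of f] by auto
  qed
  moreover have "s \<in> {1..N}" "Suc s \<in> {1..N}" if "s \<in> descent_set N ?w" for s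
    using that descent_set_subset[OF sorting_perm_bij[of N f]] by auto
  ultimately show ?thesis
    using f u by (auto simp: compatible_seqs_def sorted_values_def order_preserving_maps_def)
qed

lemma sorted_values_sorting_perm:
  assumes "\<forall>i. i \<notin> {1..N} \<longrightarrow> f i = 0"
  shows "(\<lambda>i. sorted_values N f (sorting_perm N f i)) = f"
proof
  fix i show "sorted_values N f (sorting_perm N f i) = f i"
  proof (cases "i \<in> {1..N}")
    case True
    then show ?thesis
      using bij_betwE[OF sorting_perm_bij] bij_betw_inv_into_left[OF sorting_perm_bij]
      by (simp add: sorted_values_def)
  next
    case False
    then have "sorting_perm N f i = 0" by (simp add: sorting_perm_def rank_def)
    with False show ?thesis by (simp add: assms sorted_values_def)
  qed
qed

lemma order_preserving_comp:
  assumes w: "w \<in> linear_extensions N le" and g: "g \<in> compatible_seqs N d D"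
  shows "(\<lambda>i. g (w i)) \<in> order_preserving_maps {1..N} le d"
proof -
  have w_in: "w i \<in> {1..N}" if "i \<in> {1..N}" for i
    using that w bij_betwE[of w "{1..N}" "{1..N}"] by (auto simp: linear_extensions_def)
  have "g (w i) \<le> g (w j)" if "i \<in> {1..N}" "j \<in> {1..N}" "le i j" for i j
    using that w w_in[OF that(1)] w_in[OF that(2)]
    by (intro compatible_seqs_mono[OF g]) (auto simp: linear_extensions_def)
  then show ?thesis
    using g w w_in by (auto simp: order_preserving_maps_def compatible_seqs_def linear_extensions_def)
qed

lemma compatible_seq_constant_imp_ascent:
  assumes w: "bij_betw w {1..N} {1..N}" and g: "g \<in> compatible_seqs N d (descent_set N w)"
    and st: "s \<in> {1..N}" "t \<in> {1..N}" "s < t" "g s = g t"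
  shows "inv_into {1..N} w s < inv_into {1..N} w t"
proof (rule lift_Suc_mono_less_ivl[where f = "inv_into {1..N} w" and N = "{s..<t}"])
  let ?u = "inv_into {1..N} w"
  fix v assume v: "v \<in> {s..<t}"
  have "g s \<le> g v" "g v \<le> g (Suc v)" "g (Suc v) \<le> g t"
    using st(1-3) v by (simp_all add: compatible_seqs_mono[OF g])
  then have "v \<notin> descent_set N w"
    using g st by (auto simp: compatible_seqs_def)
  moreover have "v \<in> {1..N}" "Suc v \<in> {1..N}" using v st by auto
  then have "?u v \<in> {1..N}" "?u (Suc v) \<in> {1..N}" "w (?u v) = v" "w (?u (Suc v)) = Suc v"
    using bij_betw_inv_into_right[OF w] bij_betwE[OF bij_betw_inv_into[OF w]] by blast+
  ultimately have "\<not> ?u (Suc v) < ?u v" "?u v \<noteq> ?u (Suc v)"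
    unfolding descent_set_def by fastforce+
  then show "?u v < ?u (Suc v)" by simp
qed (use st in auto)

lemma sorting_perm_comp:
  assumes w: "w \<in> linear_extensions N le" and g: "g \<in> compatible_seqs N d (descent_set N w)"
  shows "sorting_perm N (\<lambda>i. g (w i)) = w"
  unfolding sorting_perm_def
proof (rule rank_eq_perm)
  have bij: "bij_betw w {1..N} {1..N}" using w by (simp add: linear_extensions_def)
  show "bij_betw w {1..N} {1..N}" "\<forall>i. i \<notin> {1..N} \<longrightarrow> w i = 0"
    using w by (auto simp: linear_extensions_def)
  fix i j assume ij: "i \<in> {1..N}" "j \<in> {1..N}" "w i < w j"
  have wij: "w i \<in> {1..N}" "w j \<in> {1..N}" using ij bij_betwE[OF bij] by blast+
  have "g (w i) \<le> g (w j)"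
    using wij ij by (intro compatible_seqs_mono[OF g]) auto
  moreover have "i < j" if "g (w i) = g (w j)"
    using compatible_seq_constant_imp_ascent[OF bij g wij ij(3) that]
      bij_betw_inv_into_left[OF bij] ij by simp
  ultimately show "(g (w i), i) < (g (w j), j)"
    by (cases "g (w i) = g (w j)") (auto simp: less_prod_def)
qed

lemma sorted_values_comp:
  assumes w: "w \<in> linear_extensions N le" and g: "g \<in> compatible_seqs N d (descent_set N w)"
  shows "sorted_values N (\<lambda>i. g (w i)) = g"
proof
  fix s
  have "bij_betw w {1..N} {1..N}" using w by (simp add: linear_extensions_def)
  then show "sorted_values N (\<lambda>i. g (w i)) s = g s"
    using g bij_betw_inv_into_right
    by (fastforce simp: sorted_values_def sorting_perm_comp[OF w g] compatible_seqs_def)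
qed

text \<open>Stanley's fundamental lemma on \<open>P\<close>-partitions. The relation \<open>le\<close> need not be a partial
  order: compatibility with the labelling is all the bijection uses.\<close>

theorem card_order_preserving_maps:
  assumes natural: "\<forall>i\<in>{1..N}. \<forall>j\<in>{1..N}. le i j \<longrightarrow> i \<le> j"
  shows "card (order_preserving_maps {1..N} le d) =
    (\<Sum>w\<in>linear_extensions N le. (d + N - des N w) choose N)"
proof -
  let ?pairs = "SIGMA w:linear_extensions N le. compatible_seqs N d (descent_set N w)"
  have "bij_betw (\<lambda>(w, g) i. g (w i)) ?pairs (order_preserving_maps {1..N} le d)"
  proof (rule bij_betw_byWitness[where f' = "\<lambda>f. (sorting_perm N f, sorted_values N f)"])
    show "\<forall>p\<in>?pairs. (\<lambda>f. (sorting_perm N f, sorted_values N f)) ((\<lambda>(w, g) i. g (w i)) p) = p"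
      by (auto simp: sorting_perm_comp sorted_values_comp)
    show "\<forall>f\<in>order_preserving_maps {1..N} le d.
        (\<lambda>(w, g) i. g (w i)) (sorting_perm N f, sorted_values N f) = f"
      by (auto simp: sorted_values_sorting_perm order_preserving_maps_def)
    show "(\<lambda>(w, g) i. g (w i)) ` ?pairs \<subseteq> order_preserving_maps {1..N} le d"
      using order_preserving_comp by fast
    show "(\<lambda>f. (sorting_perm N f, sorted_values N f)) ` order_preserving_maps {1..N} le d \<subseteq> ?pairs"
      by (auto intro: sorting_perm_in_linear_extensions[OF _ natural] sorted_values_in_compatible_seqs)
  qed
  then have "card (order_preserving_maps {1..N} le d) = card ?pairs"
    by (simp add: bij_betw_same_card)
  also have "\<dots> = (\<Sum>w\<in>linear_extensions N le. card (compatible_seqs N d (descent_set N w)))"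
    by (rule card_SigmaI) (auto simp: finite_linear_extensions finite_compatible_seqs)
  also have "\<dots> = (\<Sum>w\<in>linear_extensions N le. (d + N - des N w) choose N)"
  proof (rule sum.cong[OF refl])
    fix w assume "w \<in> linear_extensions N le"
    then have "descent_set N w \<subseteq> {1..<N}"
      by (intro descent_set_subset) (simp add: linear_extensions_def)
    then show "card (compatible_seqs N d (descent_set N w)) = (d + N - des N w) choose N"
      by (simp add: des_eq_card_descent_set card_compatible_seqs)
  qed
  finally show ?thesis .
qed

section \<open>Disjoint unions of chains\<close>

lemma card_order_preserving_maps_transport:
  assumes \<phi>: "bij_betw \<phi> S T"
  shows "card (order_preserving_maps S (\<lambda>x y. le (\<phi> x) (\<phi> y)) d) = card (order_preserving_maps T le d)"
proof -
  let ?\<psi> = "inv_into S \<phi>"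
  have \<psi>: "bij_betw ?\<psi> T S" by (rule bij_betw_inv_into[OF \<phi>])
  have "bij_betw (\<lambda>f y. if y \<in> T then f (?\<psi> y) else 0)
      (order_preserving_maps S (\<lambda>x y. le (\<phi> x) (\<phi> y)) d) (order_preserving_maps T le d)"
  proof (rule bij_betw_byWitness[where f' = "\<lambda>h x. if x \<in> S then h (\<phi> x) else 0"])
    show "\<forall>f\<in>order_preserving_maps S (\<lambda>x y. le (\<phi> x) (\<phi> y)) d.
        (\<lambda>x. if x \<in> S then (if \<phi> x \<in> T then f (?\<psi> (\<phi> x)) else 0) else 0) = f"
      using bij_betwE[OF \<phi>] bij_betw_inv_into_left[OF \<phi>]
      by (auto simp: order_preserving_maps_def)
    show "\<forall>h\<in>order_preserving_maps T le d.
        (\<lambda>y. if y \<in> T then (if ?\<psi> y \<in> S then h (\<phi> (?\<psi> y)) else 0) else 0) = h"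
      using bij_betwE[OF \<psi>] bij_betw_inv_into_right[OF \<phi>]
      by (auto simp: order_preserving_maps_def)
    show "(\<lambda>f y. if y \<in> T then f (?\<psi> y) else 0) ` order_preserving_maps S (\<lambda>x y. le (\<phi> x) (\<phi> y)) d
        \<subseteq> order_preserving_maps T le d"
      using bij_betwE[OF \<psi>] bij_betw_inv_into_right[OF \<phi>]
      by (auto simp: order_preserving_maps_def)
    show "(\<lambda>h x. if x \<in> S then h (\<phi> x) else 0) ` order_preserving_maps T le d
        \<subseteq> order_preserving_maps S (\<lambda>x y. le (\<phi> x) (\<phi> y)) d"
      using bij_betwE[OF \<phi>] by (auto simp: order_preserving_maps_def)
  qed
  then show ?thesis by (rule bij_betw_same_card)
qed

lemma order_preserving_maps_chains_sorted:
  assumes "h \<in> order_preserving_maps {(c, t). c < K \<and> t < L c} chains_le d" "c < K"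
  shows "sorted (map (\<lambda>t. h (c, t)) [0..<L c])" "set (map (\<lambda>t. h (c, t)) [0..<L c]) \<subseteq> {..d}"
  using assms by (auto simp: sorted_iff_nth_mono order_preserving_maps_def chains_le_def)

lemma sorted_lists_order_preserving_maps_chains:
  assumes "\<And>c. c < K \<Longrightarrow> sorted (X c) \<and> length (X c) = L c \<and> set (X c) \<subseteq> {..d}"
  shows "(\<lambda>(c, t). if c < K \<and> t < L c then X c ! t else 0)
    \<in> order_preserving_maps {(c, t). c < K \<and> t < L c} chains_le d"
proof -
  have "X c ! t \<le> d" if "c < K" "t < L c" for c t
    using assms[OF that(1)] that(2) by (metis atMost_iff nth_mem subsetD)
  then show ?thesis
    using assms by (auto simp: order_preserving_maps_def chains_le_def sorted_nth_mono)
qed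

lemma card_order_preserving_maps_chains:
  "card (order_preserving_maps {(c, t). c < K \<and> t < L c} chains_le d) = (\<Prod>c<K. (d + L c) choose L c)"
proof -
  let ?C = "{(c, t). c < K \<and> t < L c}"
  let ?lists = "\<lambda>c. {xs::nat list. sorted xs \<and> length xs = L c \<and> set xs \<subseteq> {..d}}"
  define to_lists where "to_lists h = (\<lambda>c\<in>{..<K}. map (\<lambda>t. h (c, t)) [0..<L c])" for h :: "nat \<times> nat \<Rightarrow> nat"
  define of_lists where "of_lists X = (\<lambda>(c, t). if c < K \<and> t < L c then X c ! t else 0)" for X :: "nat \<Rightarrow> nat list"
  have "bij_betw to_lists (order_preserving_maps ?C chains_le d) (PiE {..<K} ?lists)"
  proof (rule bij_betw_byWitness[where f' = of_lists])
    show "\<forall>h\<in>order_preserving_maps ?C chains_le d. of_lists (to_lists h) = h"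
      by (auto simp: order_preserving_maps_def to_lists_def of_lists_def)
    show "\<forall>X\<in>PiE {..<K} ?lists. to_lists (of_lists X) = X"
    proof (intro ballI ext)
      fix X c assume X: "X \<in> PiE {..<K} ?lists"
      show "to_lists (of_lists X) c = X c"
      proof (cases "c < K")
        case True
        then have "length (X c) = L c" using X by auto
        then show ?thesis using True by (auto intro!: nth_equalityI simp: to_lists_def of_lists_def)
      qed (use X in \<open>auto simp: to_lists_def\<close>)
    qed
    show "to_lists ` order_preserving_maps ?C chains_le d \<subseteq> PiE {..<K} ?lists"
      using order_preserving_maps_chains_sorted by (simp add: to_lists_def image_subset_iff)
    show "of_lists ` PiE {..<K} ?lists \<subseteq> order_preserving_maps ?C chains_le d"
      unfolding of_lists_def by (auto intro: sorted_lists_order_preserving_maps_chains)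
  qed
  then have "card (order_preserving_maps ?C chains_le d) = card (PiE {..<K} ?lists)"
    by (rule bij_betw_same_card)
  also have "\<dots> = (\<Prod>c<K. (d + L c) choose L c)"
    by (simp add: card_PiE card_sorted_bounded_lists)
  finally show ?thesis .
qed

lemma card_order_preserving_maps_natural_labeling:
  assumes "natural_labeling m n r \<phi>"
  shows "card (order_preserving_maps {1..m + n + r - 3} (\<lambda>i j. chains_le (\<phi> i) (\<phi> j)) d) =
    (\<Prod>c<3. (d + chain_sizes m n r c) choose chain_sizes m n r c)"
proof -
  have bij: "bij_betw \<phi> {1..m + n + r - 3} (chains_carrier m n r)"
    using assms unfolding natural_labeling_def by blast
  show ?thesis
    unfolding card_order_preserving_maps_transport[OF bij] chains_carrier_def
    by (rule card_order_preserving_maps_chains)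
qed

lemma fps_choose_mult_one_minus_X_power:
  "Abs_fps (\<lambda>d. int ((d + N) choose N)) * (1 - fps_X) ^ Suc N = (1 :: int fps)"
proof (induction N)
  case 0
  show ?case
    by (rule fps_ext) (simp add: right_diff_distrib)
next
  case (Suc N)
  have "Abs_fps (\<lambda>d. int ((d + Suc N) choose Suc N)) * (1 - fps_X) = Abs_fps (\<lambda>d. int ((d + N) choose N))"
  proof (rule fps_ext)
    fix d show "fps_nth (Abs_fps (\<lambda>d. int ((d + Suc N) choose Suc N)) * (1 - fps_X)) d =
        fps_nth (Abs_fps (\<lambda>d. int ((d + N) choose N))) d"
    proof (cases d)
      case (Suc e)
      have "(Suc e + Suc N) choose Suc N = ((Suc e + N) choose N) + ((e + Suc N) choose Suc N)"
        by simp
      then show ?thesis using Suc by (simp add: right_diff_distrib)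
    qed (simp add: right_diff_distrib)
  qed
  then have "Abs_fps (\<lambda>d. int ((d + Suc N) choose Suc N)) * (1 - fps_X) ^ Suc (Suc N) =
      Abs_fps (\<lambda>d. int ((d + N) choose N)) * (1 - fps_X) ^ Suc N"
    by (simp only: power_Suc[of _ "Suc N"] mult.assoc[symmetric])
  with Suc.IH show ?case by simp
qed

lemma fps_shifted_choose_mult_one_minus_X_power:
  assumes "k \<le> N"
  shows "Abs_fps (\<lambda>d. int ((d + N - k) choose N)) * (1 - fps_X) ^ Suc N = (fps_X ^ k :: int fps)"
proof -
  have "Abs_fps (\<lambda>d. int ((d + N - k) choose N)) = fps_X ^ k * Abs_fps (\<lambda>d. int ((d + N) choose N))"
  proof (rule fps_ext)
    fix d show "fps_nth (Abs_fps (\<lambda>d. int ((d + N - k) choose N))) d =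
        fps_nth (fps_X ^ k * Abs_fps (\<lambda>d. int ((d + N) choose N))) d"
    proof (cases "d < k")
      case True
      then have "d + N - k < N" using assms by simp
      with True show ?thesis by (simp add: fps_X_power_mult_nth)
    next
      case False
      then have "d + N - k = d - k + N" by simp
      with False show ?thesis by (simp add: fps_X_power_mult_nth)
    qed
  qed
  then show ?thesis
    using fps_choose_mult_one_minus_X_power[of N] by (simp add: mult.assoc del: power_Suc)
qed

lemma fps_sum_shifted_choose_mult_one_minus_X_power:
  assumes "\<forall>w\<in>W. k w \<le> N"
  shows "Abs_fps (\<lambda>d. \<Sum>w\<in>W. int ((d + N - k w) choose N)) * (1 - fps_X) ^ Suc N =
    (\<Sum>w\<in>W. fps_X ^ k w :: int fps)"
proof -
  have "Abs_fps (\<lambda>d. \<Sum>w\<in>W. int ((d + N - k w) choose N)) =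
      (\<Sum>w\<in>W. Abs_fps (\<lambda>d. int ((d + N - k w) choose N)))"
    by (rule fps_ext) (simp add: fps_sum_nth)
  then have "Abs_fps (\<lambda>d. \<Sum>w\<in>W. int ((d + N - k w) choose N)) * (1 - fps_X) ^ Suc N =
      (\<Sum>w\<in>W. Abs_fps (\<lambda>d. int ((d + N - k w) choose N)) * (1 - fps_X) ^ Suc N)"
    by (simp only: sum_distrib_right)
  also have "\<dots> = (\<Sum>w\<in>W. fps_X ^ k w)"
    using assms by (intro sum.cong refl) (simp only: fps_shifted_choose_mult_one_minus_X_power)
  finally show ?thesis .
qed

section \<open>Monomials as multisets of variables\<close>

definition exps_of_mset :: "'v multiset \<Rightarrow> 'v \<Rightarrow>\<^sub>0 nat" where
  "exps_of_mset M = Abs_poly_mapping (count M)"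

definition mset_of_exps :: "('v \<Rightarrow>\<^sub>0 nat) \<Rightarrow> 'v multiset" where
  "mset_of_exps a = Abs_multiset (Poly_Mapping.lookup a)"

lemma lookup_exps_of_mset: "Poly_Mapping.lookup (exps_of_mset M) = count M"
proof -
  have "{x. count M x \<noteq> 0} = set_mset M" by auto
  then show ?thesis unfolding exps_of_mset_def by simp
qed

lemma count_mset_of_exps: "count (mset_of_exps a) = Poly_Mapping.lookup a"
proof -
  have "{x. 0 < Poly_Mapping.lookup a x} = Poly_Mapping.keys a" by (auto simp: in_keys_iff)
  then show ?thesis unfolding mset_of_exps_def by simp
qed

lemma exps_of_mset_of_exps [simp]: "exps_of_mset (mset_of_exps a) = a"
  by (rule poly_mapping_eqI) (simp add: lookup_exps_of_mset count_mset_of_exps)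

lemma mset_of_exps_of_mset [simp]: "mset_of_exps (exps_of_mset M) = M"
  by (rule multiset_eqI) (simp add: lookup_exps_of_mset count_mset_of_exps)

lemma exps_of_mset_eq_iff: "exps_of_mset M = exps_of_mset M' \<longleftrightarrow> M = M'"
  by (metis mset_of_exps_of_mset)

lemma keys_exps_of_mset: "Poly_Mapping.keys (exps_of_mset M) = set_mset M"
  by (auto simp: in_keys_iff lookup_exps_of_mset)

lemma exps_of_mset_plus: "exps_of_mset (M + M') = exps_of_mset M + exps_of_mset M'"
  by (rule poly_mapping_eqI) (simp add: lookup_exps_of_mset lookup_add)

lemma exps_of_mset_single: "exps_of_mset {#v#} = Poly_Mapping.single v 1"
  by (rule poly_mapping_eqI) (simp add: lookup_exps_of_mset lookup_single when_def)

lemma degree_exps_of_mset: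
  "(\<Sum>v\<in>Poly_Mapping.keys (exps_of_mset M). Poly_Mapping.lookup (exps_of_mset M) v) = size M"
  by (simp add: keys_exps_of_mset lookup_exps_of_mset size_multiset_overloaded_eq)

definition mset_monom :: "'v multiset \<Rightarrow> ('v \<Rightarrow>\<^sub>0 nat) \<Rightarrow>\<^sub>0 'a::comm_semiring_1" where
  "mset_monom M = Poly_Mapping.single (exps_of_mset M) 1"

lemma mset_monom_plus: "mset_monom (M + M') = mset_monom M * mset_monom M'"
  by (simp add: mset_monom_def exps_of_mset_plus mult_single)

lemma lookup_mset_monom: "Poly_Mapping.lookup (mset_monom M) a = (if a = exps_of_mset M then 1 else 0)"
  by (simp add: mset_monom_def lookup_single when_def eq_commute)

lemma keys_mset_monom: "Poly_Mapping.keys (mset_monom M) = {exps_of_mset M}"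
  by (simp add: mset_monom_def)

lemma mset_monom_eq_iff: "(mset_monom M :: _ \<Rightarrow>\<^sub>0 'a::comm_semiring_1) = mset_monom M' \<longleftrightarrow> M = M'"
proof
  assume "(mset_monom M :: _ \<Rightarrow>\<^sub>0 'a) = mset_monom M'"
  then have "Poly_Mapping.keys (mset_monom M :: _ \<Rightarrow>\<^sub>0 'a) = Poly_Mapping.keys (mset_monom M' :: _ \<Rightarrow>\<^sub>0 'a)"
    by simp
  then show "M = M'" by (simp add: keys_mset_monom exps_of_mset_eq_iff)
qed simp

lemma var3_eq_mset_monom: "var3 i j k = mset_monom {#(i, j, k)#}"
  by (simp add: var3_def mset_monom_def exps_of_mset_single)

lemma var3_mult_var3: "var3 i j k * var3 i' j' k' = mset_monom {#(i, j, k), (i', j', k')#}"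
  unfolding var3_eq_mset_monom mset_monom_plus[symmetric] by (simp add: add_mset_commute)

section \<open>The ideal of 2-minors\<close>

lemma ringR_add:
  assumes "p \<in> ringR m n r" "q \<in> ringR m n r"
  shows "p + q \<in> ringR m n r"
  using assms keys_add[of p q] unfolding ringR_def by auto

lemma ringR_mult:
  assumes "p \<in> ringR m n r" "q \<in> ringR m n r"
  shows "p * q \<in> ringR m n r"
  unfolding ringR_def mem_Collect_eq
proof (rule ballI)
  fix a assume "a \<in> Poly_Mapping.keys (p * q)"
  then obtain b c where "a = b + c" "b \<in> Poly_Mapping.keys p" "c \<in> Poly_Mapping.keys q"
    using keys_mult by blast
  with assms show "Poly_Mapping.keys a \<subseteq> vars3 m n r"
    using keys_add[of b c] unfolding ringR_def by blast
qed

lemma ringR_mset_monom: "set_mset M \<subseteq> vars3 m n r \<Longrightarrow> mset_monom M \<in> ringR m n r"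
  by (simp add: ringR_def keys_mset_monom keys_exps_of_mset)

lemma ringR_const: "Poly_Mapping.single 0 c \<in> ringR m n r"
  by (simp add: ringR_def)

lemma ringR_uminus: "p \<in> ringR m n r \<Longrightarrow> - p \<in> ringR m n r"
  by (simp add: ringR_def)

lemma ideal_genI:
  assumes "finite F" "F \<subseteq> G" "\<forall>g\<in>F. c g \<in> ringR m n r"
  shows "(\<Sum>g\<in>F. c g * g) \<in> ideal_gen m n r G"
  unfolding ideal_gen_def using assms by blast

lemma ideal_gen_zero: "0 \<in> ideal_gen m n r G"
  using ideal_genI[of "{}"] by simp

lemma ideal_gen_base: "g \<in> G \<Longrightarrow> g \<in> ideal_gen m n r G"
  using ideal_genI[of "{g}" G "\<lambda>_. 1"] by (simp add: ringR_def)

lemma ideal_gen_add: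
  assumes "p \<in> ideal_gen m n r G" "q \<in> ideal_gen m n r G"
  shows "p + q \<in> ideal_gen m n r G"
proof -
  obtain F1 c1 where 1: "p = (\<Sum>g\<in>F1. c1 g * g)" "finite F1" "F1 \<subseteq> G" "\<forall>g\<in>F1. c1 g \<in> ringR m n r"
    using assms(1) unfolding ideal_gen_def by blast
  obtain F2 c2 where 2: "q = (\<Sum>g\<in>F2. c2 g * g)" "finite F2" "F2 \<subseteq> G" "\<forall>g\<in>F2. c2 g \<in> ringR m n r"
    using assms(2) unfolding ideal_gen_def by blast
  define c where "c g = (if g \<in> F1 then c1 g else 0) + (if g \<in> F2 then c2 g else 0)" for g
  have "(\<Sum>g\<in>F1 \<union> F2. c g * g) =
      (\<Sum>g\<in>F1 \<union> F2. (if g \<in> F1 then c1 g * g else 0) + (if g \<in> F2 then c2 g * g else 0))"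
    by (rule sum.cong) (auto simp: c_def distrib_right)
  also have "\<dots> =
      (\<Sum>g\<in>F1 \<union> F2. if g \<in> F1 then c1 g * g else 0) + (\<Sum>g\<in>F1 \<union> F2. if g \<in> F2 then c2 g * g else 0)"
    by (rule sum.distrib)
  also have "\<dots> = p + q"
    using 1 2 by (simp add: sum.If_cases Int_absorb1 Int_absorb2)
  finally have "p + q = (\<Sum>g\<in>F1 \<union> F2. c g * g)" ..
  moreover have "c g \<in> ringR m n r" if "g \<in> F1 \<union> F2" for g
  proof -
    have "(0 :: 'a mpoly3) \<in> ringR m n r" by (simp add: ringR_def)
    then show ?thesis
      unfolding c_def using 1(4) 2(4) that by (intro ringR_add) auto
  qed
  ultimately show ?thesis using 1 2 ideal_genI[of "F1 \<union> F2" G c] by auto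
qed

lemma ideal_gen_mult:
  assumes "p \<in> ideal_gen m n r G" "h \<in> ringR m n r"
  shows "h * p \<in> ideal_gen m n r G"
proof -
  obtain F c where F: "p = (\<Sum>g\<in>F. c g * g)" "finite F" "F \<subseteq> G" "\<forall>g\<in>F. c g \<in> ringR m n r"
    using assms(1) unfolding ideal_gen_def by blast
  then have "h * p = (\<Sum>g\<in>F. (h * c g) * g)" by (simp add: sum_distrib_left mult.assoc)
  then show ?thesis
    using F assms(2) ideal_genI[of F G "\<lambda>g. h * c g"] by (simp add: ringR_mult)
qed

lemma ideal_gen_uminus: "p \<in> ideal_gen m n r G \<Longrightarrow> - p \<in> ideal_gen m n r G"
  using ideal_gen_mult[OF _ ringR_uminus[OF ringR_const[where c = 1]]] by simp

lemma Imnr_zero: "0 \<in> Imnr m n r"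
  unfolding Imnr_def by (rule ideal_gen_zero)

lemma Imnr_mult: "p \<in> Imnr m n r \<Longrightarrow> h \<in> ringR m n r \<Longrightarrow> h * p \<in> Imnr m n r"
  unfolding Imnr_def by (rule ideal_gen_mult)

lemma Imnr_diff_commute: "(a - b :: 'a::field mpoly3) \<in> Imnr m n r \<Longrightarrow> b - a \<in> Imnr m n r"
  unfolding Imnr_def using ideal_gen_uminus[of "a - b"] by simp

lemma Imnr_diff_trans:
  "(a - b :: 'a::field mpoly3) \<in> Imnr m n r \<Longrightarrow> b - c \<in> Imnr m n r \<Longrightarrow> a - c \<in> Imnr m n r"
  unfolding Imnr_def using ideal_gen_add[of "a - b" m n r _ "b - c"] by simp

lemma Imnr_diff_mult:
  assumes "set_mset R \<subseteq> vars3 m n r" "mset_monom A - mset_monom B \<in> (Imnr m n r :: 'a::field mpoly3 set)"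
  shows "mset_monom (R + A) - mset_monom (R + B) \<in> (Imnr m n r :: 'a mpoly3 set)"
  using Imnr_mult[OF assms(2) ringR_mset_monom[OF assms(1)]]
  by (simp add: mset_monom_plus right_diff_distrib)

lemma hminor_in_Imnr:
  assumes "(i, j, k) \<in> vars3 m n r" "(i', j', k') \<in> vars3 m n r" "i < i'" "(k, j) < (k', j')"
  shows "mset_monom {#(i, j, k), (i', j', k')#} - mset_monom {#(i', j, k), (i, j', k')#}
    \<in> (Imnr m n r :: 'a::field mpoly3 set)"
proof -
  have "(var3 i j k * var3 i' j' k' - var3 i j' k' * var3 i' j k :: 'a mpoly3) \<in> hminors m n r"
  proof -
    have "k < k' \<or> k = k' \<and> j < j'" using assms(4) by (auto simp: less_prod_def)
    with assms(1-3) show ?thesis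
      unfolding hminors_def mem_Collect_eq
      by (intro exI[of _ i] exI[of _ i'] exI[of _ j] exI[of _ j'] exI[of _ k] exI[of _ k'])
         (simp add: vars3_def)
  qed
  then show ?thesis
    unfolding Imnr_def by (auto intro: ideal_gen_base simp: var3_mult_var3 add_mset_commute)
qed

lemma vminor_in_Imnr:
  assumes "(i, j, k) \<in> vars3 m n r" "(i', j', k') \<in> vars3 m n r" "j < j'" "(k, i) < (k', i')"
  shows "mset_monom {#(i, j, k), (i', j', k')#} - mset_monom {#(i, j', k), (i', j, k')#}
    \<in> (Imnr m n r :: 'a::field mpoly3 set)"
proof -
  have "(var3 i j k * var3 i' j' k' - var3 i j' k * var3 i' j k' :: 'a mpoly3) \<in> vminors m n r"
  proof -
    have "k < k' \<or> k = k' \<and> i < i'" using assms(4) by (auto simp: less_prod_def)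
    with assms(1-3) show ?thesis
      unfolding vminors_def mem_Collect_eq
      by (intro exI[of _ i] exI[of _ i'] exI[of _ j] exI[of _ j'] exI[of _ k] exI[of _ k'])
         (simp add: vars3_def)
  qed
  then show ?thesis
    unfolding Imnr_def by (auto intro: ideal_gen_base simp: var3_mult_var3)
qed

lemma row_swap_in_Imnr_less:
  assumes e: "(i, j, k) \<in> vars3 m n r" and e': "(i', j', k') \<in> vars3 m n r" and "i < i'"
  shows "mset_monom {#(i, j, k), (i', j', k')#} - mset_monom {#(i', j, k), (i, j', k')#}
    \<in> (Imnr m n r :: 'a::field mpoly3 set)"
proof -
  consider "(k, j) < (k', j')" | "(k, j) = (k', j')" | "(k', j') < (k, j)"
    using less_linear by blast
  then show ?thesis
  proof cases
    case 1
    then show ?thesis using hminor_in_Imnr[OF e e' \<open>i < i'\<close>] by blast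
  next
    case 2
    then show ?thesis by (simp add: Imnr_zero add_mset_commute)
  next
    case 3
    have "(i, j', k') \<in> vars3 m n r" "(i', j, k) \<in> vars3 m n r"
      using e e' by (auto simp: vars3_def)
    from hminor_in_Imnr[OF this \<open>i < i'\<close> 3] show ?thesis
      by (auto dest: Imnr_diff_commute simp: add_mset_commute)
  qed
qed

lemma row_swap_in_Imnr:
  assumes e: "(i, j, k) \<in> vars3 m n r" and e': "(i', j', k') \<in> vars3 m n r"
  shows "mset_monom {#(i, j, k), (i', j', k')#} - mset_monom {#(i', j, k), (i, j', k')#}
    \<in> (Imnr m n r :: 'a::field mpoly3 set)"
proof -
  consider "i < i'" | "i = i'" | "i' < i" by arith
  then show ?thesis
  proof cases
    case 1
    then show ?thesis using row_swap_in_Imnr_less[OF e e'] by blast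
  next
    case 2
    then show ?thesis by (simp add: Imnr_zero add_mset_commute)
  next
    case 3
    from row_swap_in_Imnr_less[OF e' e 3] show ?thesis
      by (simp add: add_mset_commute)
  qed
qed

lemma col_swap_in_Imnr_less:
  assumes e: "(i, j, k) \<in> vars3 m n r" and e': "(i', j', k') \<in> vars3 m n r" and "j < j'"
  shows "mset_monom {#(i, j, k), (i', j', k')#} - mset_monom {#(i, j', k), (i', j, k')#}
    \<in> (Imnr m n r :: 'a::field mpoly3 set)"
proof -
  consider "(k, i) < (k', i')" | "(k, i) = (k', i')" | "(k', i') < (k, i)"
    using less_linear by blast
  then show ?thesis
  proof cases
    case 1
    then show ?thesis using vminor_in_Imnr[OF e e' \<open>j < j'\<close>] by blast
  next
    case 2
    then show ?thesis by (simp add: Imnr_zero add_mset_commute)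
  next
    case 3
    have "(i', j, k') \<in> vars3 m n r" "(i, j', k) \<in> vars3 m n r"
      using e e' by (auto simp: vars3_def)
    from vminor_in_Imnr[OF this \<open>j < j'\<close> 3] show ?thesis
      by (auto dest: Imnr_diff_commute simp: add_mset_commute)
  qed
qed

lemma col_swap_in_Imnr:
  assumes e: "(i, j, k) \<in> vars3 m n r" and e': "(i', j', k') \<in> vars3 m n r"
  shows "mset_monom {#(i, j, k), (i', j', k')#} - mset_monom {#(i, j', k), (i', j, k')#}
    \<in> (Imnr m n r :: 'a::field mpoly3 set)"
proof -
  consider "j < j'" | "j = j'" | "j' < j" by arith
  then show ?thesis
  proof cases
    case 1
    then show ?thesis using col_swap_in_Imnr_less[OF e e'] by blast
  next
    case 2
    then show ?thesis by (simp add: Imnr_zero add_mset_commute)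
  next
    case 3
    from col_swap_in_Imnr_less[OF e' e 3] show ?thesis
      by (simp add: add_mset_commute)
  qed
qed

definition marginals :: "(nat \<times> nat \<times> nat) multiset \<Rightarrow> nat multiset \<times> nat multiset \<times> nat multiset" where
  "marginals M = (image_mset fst M, image_mset (fst \<circ> snd) M, image_mset (snd \<circ> snd) M)"

lemma mset_eq_pair_plus:
  assumes "e \<in># M" "e' \<in># M" "e \<noteq> e'"
  shows "M = (M - {#e, e'#}) + {#e, e'#}"
proof -
  have "e' \<in># M - {#e#}" using assms by (simp add: in_diff_count)
  then show ?thesis
    using assms(1) by (metis add_mset_add_single add_mset_diff_bothsides insert_DiffM union_mset_add_mset_right)
qed

lemma exchange_rows:
  assumes V: "set_mset M \<subseteq> vars3 m n r" and e: "e \<in># M" and e': "e' \<in># M"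
  obtains M' where "mset_monom M - mset_monom M' \<in> (Imnr m n r :: 'a::field mpoly3 set)"
    "marginals M' = marginals M" "set_mset M' \<subseteq> vars3 m n r" "(fst e, snd e') \<in># M'"
proof (cases "e = e'")
  case True
  then show ?thesis using that[of M] e V Imnr_zero[of m n r] by simp
next
  case False
  obtain i j k i' j' k' where ijk: "e' = (i, j, k)" "e = (i', j', k')" by (metis prod.exhaust)
  define R where "R = M - {#e', e#}"
  have M: "M = R + {#(i, j, k), (i', j', k')#}"
    unfolding R_def ijk[symmetric] using mset_eq_pair_plus[OF e' e] False by auto
  have vars: "(i, j, k) \<in> vars3 m n r" "(i', j', k') \<in> vars3 m n r" "set_mset R \<subseteq> vars3 m n r"
    using V e e' ijk M by auto
  let ?M' = "R + {#(i', j, k), (i, j', k')#}"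
  show ?thesis
  proof (rule that[of ?M'])
    show "mset_monom M - mset_monom ?M' \<in> (Imnr m n r :: 'a mpoly3 set)"
      using Imnr_diff_mult[OF vars(3) row_swap_in_Imnr[OF vars(1,2)]] M by simp
  qed (use M vars ijk in \<open>auto simp: marginals_def vars3_def\<close>)
qed

lemma exchange_cols:
  assumes V: "set_mset M \<subseteq> vars3 m n r" and e: "e \<in># M" and e': "e' \<in># M"
  obtains M' where "mset_monom M - mset_monom M' \<in> (Imnr m n r :: 'a::field mpoly3 set)"
    "marginals M' = marginals M" "set_mset M' \<subseteq> vars3 m n r" "(fst e, fst (snd e'), snd (snd e)) \<in># M'"
proof (cases "e = e'")
  case True
  then show ?thesis using that[of M] e V Imnr_zero[of m n r] by simp
next
  case False
  obtain i j k i' j' k' where ijk: "e = (i, j, k)" "e' = (i', j', k')" by (metis prod.exhaust)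
  define R where "R = M - {#e, e'#}"
  have M: "M = R + {#(i, j, k), (i', j', k')#}"
    unfolding R_def ijk[symmetric] using mset_eq_pair_plus[OF e e'] False by auto
  have vars: "(i, j, k) \<in> vars3 m n r" "(i', j', k') \<in> vars3 m n r" "set_mset R \<subseteq> vars3 m n r"
    using V e e' ijk M by auto
  let ?M' = "R + {#(i, j', k), (i', j, k')#}"
  show ?thesis
  proof (rule that[of ?M'])
    show "mset_monom M - mset_monom ?M' \<in> (Imnr m n r :: 'a mpoly3 set)"
      using Imnr_diff_mult[OF vars(3) col_swap_in_Imnr[OF vars(1,2)]] M by simp
  qed (use M vars ijk in \<open>auto simp: marginals_def vars3_def\<close>)
qed

text \<open>Induction on \<open>M'\<close>: a row exchange and then a column exchange move its variable
  \<open>(a, b, c)\<close> into \<open>M\<close> without changing the marginals.\<close>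

lemma marginals_eq_imp_diff_in_Imnr:
  assumes "set_mset M \<subseteq> vars3 m n r" "set_mset M' \<subseteq> vars3 m n r" "marginals M = marginals M'"
  shows "mset_monom M - mset_monom M' \<in> (Imnr m n r :: 'a::field mpoly3 set)"
  using assms
proof (induction M' arbitrary: M)
  case empty
  then show ?case by (simp add: marginals_def Imnr_zero)
next
  case (add t M'' M)
  obtain a b c where t: "t = (a, b, c)" by (metis prod.exhaust)
  have marg: "marginals M = marginals (add_mset t M'')" by fact
  have "a \<in># image_mset fst M" "c \<in># image_mset (snd \<circ> snd) M"
    using marg t by (simp_all add: marginals_def)
  then obtain e1 e3 where "e1 \<in># M" "fst e1 = a" "e3 \<in># M" "snd (snd e3) = c"
    by auto
  then obtain M1 where M1: "mset_monom M - mset_monom M1 \<in> (Imnr m n r :: 'a mpoly3 set)"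
    "marginals M1 = marginals M" "set_mset M1 \<subseteq> vars3 m n r" "(a, snd e3) \<in># M1"
    using exchange_rows[OF add.prems(1)] by metis
  have "b \<in># image_mset (fst \<circ> snd) M1"
    using marg t M1(2) by (simp add: marginals_def)
  then obtain e2 where "e2 \<in># M1" "fst (snd e2) = b"
    by auto
  then obtain M2 where M2: "mset_monom M1 - mset_monom M2 \<in> (Imnr m n r :: 'a mpoly3 set)"
    "marginals M2 = marginals M1" "set_mset M2 \<subseteq> vars3 m n r" "t \<in># M2"
    using exchange_cols[OF M1(3) M1(4)] \<open>snd (snd e3) = c\<close> t by (metis fst_conv snd_conv)
  define R where "R = M2 - {#t#}"
  have M2_eq: "M2 = add_mset t R" using M2(4) by (simp add: R_def)
  have "marginals R = marginals M''"
    using M2(2) M1(2) marg unfolding M2_eq by (simp add: marginals_def)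
  moreover have "set_mset R \<subseteq> vars3 m n r" using M2(3) M2_eq by auto
  ultimately have "mset_monom R - mset_monom M'' \<in> (Imnr m n r :: 'a mpoly3 set)"
    using add.IH add.prems(2) by auto
  moreover have "set_mset {#t#} \<subseteq> vars3 m n r" using add.prems(2) by simp
  ultimately have "mset_monom ({#t#} + R) - mset_monom ({#t#} + M'') \<in> (Imnr m n r :: 'a mpoly3 set)"
    using Imnr_diff_mult by blast
  then have "mset_monom M2 - mset_monom (add_mset t M'') \<in> (Imnr m n r :: 'a mpoly3 set)"
    using M2_eq by simp
  then show ?case using M1(1) M2(1) Imnr_diff_trans by metis
qed

section \<open>The Hilbert function\<close>

lemma lookup_cscale: "Poly_Mapping.lookup (cscale c p) a = c * Poly_Mapping.lookup p a"
  by (simp add: cscale_def flip: mult_map_scale_conv_mult) (simp add: map.rep_eq when_def)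

interpretation VS: vector_space "cscale :: 'a::field \<Rightarrow> 'a mpoly3 \<Rightarrow> 'a mpoly3"
  by unfold_locales (auto intro!: poly_mapping_eqI simp: lookup_cscale lookup_add algebra_simps)

lemma lookup_sum_cscale:
  "Poly_Mapping.lookup (\<Sum>v\<in>B. cscale (u v) (f v)) a = (\<Sum>v\<in>B. u v * Poly_Mapping.lookup (f v) a)"
  by (simp add: lookup_sum lookup_cscale)

lemma independent_if_dual_monomials:
  assumes "\<And>v. v \<in> B \<Longrightarrow> \<exists>a. \<forall>v'\<in>B. Poly_Mapping.lookup v' a = (if v' = v then 1 else 0)"
  shows "VS.independent (B :: 'a::field mpoly3 set)"
  unfolding VS.dependent_explicit
proof clarify
  fix T u v assume T: "finite T" "T \<subseteq> B" "(\<Sum>v\<in>T. cscale (u v) v) = 0" "v \<in> T" "u v \<noteq> 0"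
  obtain a where a: "\<forall>v'\<in>B. Poly_Mapping.lookup v' a = (if v' = v then 1 else 0)"
    using assms T(2,4) by blast
  have "Poly_Mapping.lookup (\<Sum>v\<in>T. cscale (u v) v) a = (\<Sum>v'\<in>T. if v' = v then u v else 0)"
    unfolding lookup_sum_cscale using a T(2) by (intro sum.cong) auto
  also have "\<dots> = u v" using T(1,4) by simp
  finally show False using T(3,5) by simp
qed

abbreviation degree_msets :: "nat \<Rightarrow> nat \<Rightarrow> nat \<Rightarrow> nat \<Rightarrow> (nat \<times> nat \<times> nat) multiset set" where
  "degree_msets m n r d \<equiv> multisets_of_size (vars3 m n r) d"

lemma finite_degree_msets: "finite (degree_msets m n r d)"
proof (rule finite_multisets_of_size)
  show "finite (vars3 m n r)"
    by (rule finite_subset[of _ "{1..m} \<times> {1..n} \<times> {1..r}"]) (auto simp: vars3_def)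
qed

lemma homog_iff: "p \<in> homog m n r d \<longleftrightarrow> (\<forall>a\<in>Poly_Mapping.keys p. mset_of_exps a \<in> degree_msets m n r d)"
proof -
  have "set_mset (mset_of_exps a) = Poly_Mapping.keys a"
    and "size (mset_of_exps a) = (\<Sum>v\<in>Poly_Mapping.keys a. Poly_Mapping.lookup a v)"
    for a :: "(nat \<times> nat \<times> nat) \<Rightarrow>\<^sub>0 nat"
    using keys_exps_of_mset[of "mset_of_exps a"] degree_exps_of_mset[of "mset_of_exps a"] by simp_all
  then show ?thesis
    by (auto simp: homog_def ringR_def multisets_of_size_def)
qed

lemma mset_monom_homog: "M \<in> degree_msets m n r d \<Longrightarrow> mset_monom M \<in> homog m n r d"
  by (simp add: homog_iff keys_mset_monom)

lemma diff_mset_monom_homog: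
  assumes "M \<in> degree_msets m n r d" "M' \<in> degree_msets m n r d"
  shows "mset_monom M - mset_monom M' \<in> homog m n r d"
proof -
  have "Poly_Mapping.keys (mset_monom M - mset_monom M' :: 'a::field mpoly3) \<subseteq> {exps_of_mset M, exps_of_mset M'}"
    using keys_diff[of "mset_monom M :: 'a mpoly3" "mset_monom M'"] by (simp add: keys_mset_monom insert_commute)
  then show ?thesis using assms by (auto simp: homog_iff)
qed

lemma sum_monoms_homog_eq:
  assumes p: "p \<in> homog m n r d"
  shows "(\<Sum>M\<in>degree_msets m n r d. cscale (Poly_Mapping.lookup p (exps_of_mset M)) (mset_monom M)) = p"
  (is "?s = p")
proof (rule poly_mapping_eqI)
  fix a
  have "Poly_Mapping.lookup ?s a
      = (\<Sum>M\<in>degree_msets m n r d. if M = mset_of_exps a then Poly_Mapping.lookup p a else 0)"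
    unfolding lookup_sum_cscale by (intro sum.cong) (auto simp: lookup_mset_monom)
  also have "\<dots> = Poly_Mapping.lookup p a"
    using p finite_degree_msets by (auto simp: homog_iff in_keys_iff)
  finally show "Poly_Mapping.lookup ?s a = Poly_Mapping.lookup p a" .
qed

lemma dim_homog: "VS.dim (homog m n r d :: 'a::field mpoly3 set) = card (degree_msets m n r d)"
proof -
  let ?B = "(mset_monom :: _ \<Rightarrow> 'a mpoly3) ` degree_msets m n r d"
  have "?B \<subseteq> homog m n r d" using mset_monom_homog by blast
  moreover have "homog m n r d \<subseteq> VS.span ?B"
  proof
    fix p :: "'a mpoly3" assume p: "p \<in> homog m n r d"
    have "(\<Sum>M\<in>degree_msets m n r d. cscale (Poly_Mapping.lookup p (exps_of_mset M)) (mset_monom M))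
        \<in> VS.span ?B"
      by (intro VS.span_sum VS.span_scale VS.span_base) auto
    then show "p \<in> VS.span ?B" using sum_monoms_homog_eq[OF p] by simp
  qed
  moreover have "VS.independent ?B"
  proof (rule independent_if_dual_monomials)
    fix v assume "v \<in> ?B"
    then obtain M where "v = mset_monom M" by blast
    then show "\<exists>a. \<forall>v'\<in>?B. Poly_Mapping.lookup v' a = (if v' = v then 1 else 0)"
      by (intro exI[of _ "exps_of_mset M"]) (auto simp: lookup_mset_monom exps_of_mset_eq_iff mset_monom_eq_iff)
  qed
  moreover have "card ?B = card (degree_msets m n r d)"
    by (intro card_image inj_onI) (simp add: mset_monom_eq_iff)
  ultimately show ?thesis using VS.dim_unique[of ?B "homog m n r d"] by simp
qed

definition marginal_coeff :: "nat multiset \<times> nat multiset \<times> nat multiset \<Rightarrow> 'a::field mpoly3 \<Rightarrow> 'a" where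
  "marginal_coeff s p = (\<Sum>a\<in>Poly_Mapping.keys p.
     if marginals (mset_of_exps a) = s then Poly_Mapping.lookup p a else 0)"

lemma marginal_coeff_zero [simp]: "marginal_coeff s 0 = 0"
  by (simp add: marginal_coeff_def)

lemma marginal_coeff_single:
  "marginal_coeff s (Poly_Mapping.single a v) = (if marginals (mset_of_exps a) = s then v else 0)"
  by (simp add: marginal_coeff_def)

lemma marginal_coeff_add: "marginal_coeff s (p + q) = marginal_coeff s p + marginal_coeff s q"
  unfolding marginal_coeff_def
  by (rule setsum_keys_plus_distrib[where f = "\<lambda>a v. if marginals (mset_of_exps a) = s then v else 0"]) auto

lemma marginal_coeff_diff: "marginal_coeff s (p - q) = marginal_coeff s p - marginal_coeff s q"
  using marginal_coeff_add[of s "p - q" q] by simp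

lemma marginal_coeff_sum: "marginal_coeff s (sum h F) = (\<Sum>g\<in>F. marginal_coeff s (h g))"
  by (induction F rule: infinite_finite_induct) (simp_all add: marginal_coeff_add)

lemma sum_single_keys: "(\<Sum>u\<in>Poly_Mapping.keys p. Poly_Mapping.single u (Poly_Mapping.lookup p u)) = p"
proof (rule poly_mapping_eqI)
  fix a
  show "Poly_Mapping.lookup (\<Sum>u\<in>Poly_Mapping.keys p. Poly_Mapping.single u (Poly_Mapping.lookup p u)) a =
      Poly_Mapping.lookup p a"
    by (simp add: lookup_sum lookup_single when_def in_keys_iff)
qed

lemma marginal_coeff_mult_mset_monom:
  "marginal_coeff s (c * mset_monom A) =
     (\<Sum>u\<in>Poly_Mapping.keys c. if marginals (mset_of_exps u + A) = s then Poly_Mapping.lookup c u else 0)"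
proof -
  have "c * mset_monom A = (\<Sum>u\<in>Poly_Mapping.keys c. Poly_Mapping.single (u + exps_of_mset A) (Poly_Mapping.lookup c u))"
    by (subst sum_single_keys[of c, symmetric]) (simp add: sum_distrib_right mset_monom_def mult_single)
  moreover have "mset_of_exps (u + exps_of_mset A) = mset_of_exps u + A" for u
    by (metis exps_of_mset_of_exps exps_of_mset_plus mset_of_exps_of_mset)
  ultimately show ?thesis
    by (simp add: marginal_coeff_sum marginal_coeff_single)
qed

lemma marginal_coeff_mult_mset_monom_cong:
  "marginals A = marginals B \<Longrightarrow> marginal_coeff s (c * mset_monom A) = marginal_coeff s (c * mset_monom B)"
  by (simp add: marginal_coeff_mult_mset_monom marginals_def)

lemma minor_eq_diff_mset_monom:
  assumes "g \<in> hminors m n r \<union> vminors m n r"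
  obtains A B where "g = mset_monom A - mset_monom B" "marginals A = marginals B"
  using assms
proof
  assume "g \<in> hminors m n r"
  then obtain i i' j j' k k' where "g = var3 i j k * var3 i' j' k' - var3 i j' k' * var3 i' j k"
    unfolding hminors_def by blast
  then show ?thesis
    using that[of "{#(i, j, k), (i', j', k')#}" "{#(i, j', k'), (i', j, k)#}"]
    by (simp add: var3_mult_var3 marginals_def add_mset_commute)
next
  assume "g \<in> vminors m n r"
  then obtain i i' j j' k k' where "g = var3 i j k * var3 i' j' k' - var3 i j' k * var3 i' j k'"
    unfolding vminors_def by blast
  then show ?thesis
    using that[of "{#(i, j, k), (i', j', k')#}" "{#(i, j', k), (i', j, k')#}"]
    by (simp add: var3_mult_var3 marginals_def add_mset_commute)
qed

lemma marginal_coeff_Imnr: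
  assumes "p \<in> Imnr m n r"
  shows "marginal_coeff s p = 0"
proof -
  obtain F c where F: "p = (\<Sum>g\<in>F. c g * g)" "F \<subseteq> hminors m n r \<union> vminors m n r"
    using assms unfolding Imnr_def ideal_gen_def by blast
  have "marginal_coeff s (c g * g) = 0" if g: "g \<in> F" for g
  proof -
    obtain A B where AB: "g = mset_monom A - mset_monom B" "marginals A = marginals B"
      using minor_eq_diff_mset_monom F(2) g by blast
    then have "marginal_coeff s (c g * mset_monom A) = marginal_coeff s (c g * mset_monom B)"
      by (intro marginal_coeff_mult_mset_monom_cong)
    with AB(1) show ?thesis
      by (simp add: right_diff_distrib marginal_coeff_diff)
  qed
  then show ?thesis using F(1) by (simp add: marginal_coeff_sum)
qed

lemma marginal_coeff_homog:
  assumes p: "p \<in> homog m n r d"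
  shows "marginal_coeff s p =
    (\<Sum>M\<in>{M\<in>degree_msets m n r d. marginals M = s}. Poly_Mapping.lookup p (exps_of_mset M))"
proof -
  have keys: "Poly_Mapping.keys p \<subseteq> exps_of_mset ` degree_msets m n r d"
  proof
    fix a assume "a \<in> Poly_Mapping.keys p"
    then have "mset_of_exps a \<in> degree_msets m n r d" using p by (simp add: homog_iff)
    then show "a \<in> exps_of_mset ` degree_msets m n r d" by (metis image_eqI exps_of_mset_of_exps)
  qed
  have "marginal_coeff s p = (\<Sum>a\<in>exps_of_mset ` degree_msets m n r d.
      if marginals (mset_of_exps a) = s then Poly_Mapping.lookup p a else 0)"
    unfolding marginal_coeff_def
    by (rule sum.mono_neutral_left) (auto simp: finite_degree_msets keys in_keys_iff)
  also have "\<dots> = (\<Sum>M\<in>degree_msets m n r d. if marginals M = s then Poly_Mapping.lookup p (exps_of_mset M) else 0)"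
    by (subst sum.reindex) (auto intro: inj_onI simp: exps_of_mset_eq_iff)
  finally show ?thesis
    by (simp add: sum.inter_filter[OF finite_degree_msets])
qed

definition marginal_rep ::
    "nat \<Rightarrow> nat \<Rightarrow> nat \<Rightarrow> nat \<Rightarrow> nat multiset \<times> nat multiset \<times> nat multiset \<Rightarrow> (nat \<times> nat \<times> nat) multiset" where
  "marginal_rep m n r d s = (SOME M. M \<in> degree_msets m n r d \<and> marginals M = s)"

lemma marginal_rep:
  assumes "M \<in> degree_msets m n r d"
  shows "marginal_rep m n r d (marginals M) \<in> degree_msets m n r d"
    and "marginals (marginal_rep m n r d (marginals M)) = marginals M"
proof -
  have "\<exists>M'. M' \<in> degree_msets m n r d \<and> marginals M' = marginals M" using assms by blast
  then have "marginal_rep m n r d (marginals M) \<in> degree_msets m n r d \<and>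
      marginals (marginal_rep m n r d (marginals M)) = marginals M"
    unfolding marginal_rep_def by (rule someI_ex)
  then show "marginal_rep m n r d (marginals M) \<in> degree_msets m n r d"
    and "marginals (marginal_rep m n r d (marginals M)) = marginals M" by auto
qed

definition rep_diff :: "nat \<Rightarrow> nat \<Rightarrow> nat \<Rightarrow> nat \<Rightarrow> (nat \<times> nat \<times> nat) multiset \<Rightarrow> 'a::field mpoly3" where
  "rep_diff m n r d M = mset_monom M - mset_monom (marginal_rep m n r d (marginals M))"

abbreviation non_reps :: "nat \<Rightarrow> nat \<Rightarrow> nat \<Rightarrow> nat \<Rightarrow> (nat \<times> nat \<times> nat) multiset set" where
  "non_reps m n r d \<equiv> {M \<in> degree_msets m n r d. marginal_rep m n r d (marginals M) \<noteq> M}"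

lemma lookup_rep_diff:
  assumes M: "M \<in> non_reps m n r d" and M': "M' \<in> degree_msets m n r d"
  shows "Poly_Mapping.lookup (rep_diff m n r d M') (exps_of_mset M) = (if M' = M then 1 else 0)"
proof -
  have "marginal_rep m n r d (marginals M') \<noteq> M"
  proof
    assume rep: "marginal_rep m n r d (marginals M') = M"
    then have "marginals M = marginals M'" using marginal_rep(2)[OF M'] by simp
    with rep M show False by simp
  qed
  then show ?thesis
    by (auto simp: rep_diff_def lookup_mset_monom exps_of_mset_eq_iff lookup_minus)
qed

lemma rep_diff_in_Imnr_homog:
  assumes M: "M \<in> degree_msets m n r d"
  shows "rep_diff m n r d M \<in> Imnr m n r \<inter> homog m n r d"
proof
  have "set_mset M \<subseteq> vars3 m n r" "set_mset (marginal_rep m n r d (marginals M)) \<subseteq> vars3 m n r"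
    using M marginal_rep(1)[OF M] by (auto simp: multisets_of_size_def)
  then show "rep_diff m n r d M \<in> Imnr m n r"
    unfolding rep_diff_def using marginal_rep(2)[OF M]
    by (intro marginals_eq_imp_diff_in_Imnr) simp_all
  show "rep_diff m n r d M \<in> homog m n r d"
    unfolding rep_diff_def using M marginal_rep(1)[OF M] by (rule diff_mset_monom_homog)
qed

lemma independent_rep_diffs: "VS.independent (rep_diff m n r d ` non_reps m n r d :: 'a::field mpoly3 set)"
proof (rule independent_if_dual_monomials)
  fix v :: "'a mpoly3" assume "v \<in> rep_diff m n r d ` non_reps m n r d"
  then obtain M where M: "M \<in> non_reps m n r d" "v = rep_diff m n r d M" by blast
  have "Poly_Mapping.lookup v' (exps_of_mset M) = (if v' = v then 1 else 0)"
    if v': "v' \<in> rep_diff m n r d ` non_reps m n r d" for v'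
  proof -
    obtain M' where M': "M' \<in> non_reps m n r d" "v' = rep_diff m n r d M'" using v' by blast
    have v_M: "Poly_Mapping.lookup v (exps_of_mset M) = 1"
      using lookup_rep_diff[OF M(1), of M] M by simp
    show ?thesis
    proof (cases "M' = M")
      case False
      then have "Poly_Mapping.lookup v' (exps_of_mset M) = 0"
        using lookup_rep_diff[OF M(1), of M'] M' by simp
      with v_M show ?thesis by auto
    qed (use M M' v_M in simp)
  qed
  then show "\<exists>a. \<forall>v'\<in>rep_diff m n r d ` non_reps m n r d. Poly_Mapping.lookup v' a = (if v' = v then 1 else 0)"
    by blast
qed

text \<open>Grouping the monomials of \<open>p\<close> by their marginals turns the representatives' part of \<open>p\<close>
  into a combination of the functionals \<open>marginal_coeff\<close>, which vanish on the ideal.\<close>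

lemma sum_marginal_rep_monoms_Imnr:
  assumes p: "p \<in> Imnr m n r \<inter> homog m n r d"
  shows "(\<Sum>M\<in>degree_msets m n r d.
      cscale (Poly_Mapping.lookup p (exps_of_mset M)) (mset_monom (marginal_rep m n r d (marginals M)))) = 0"
proof -
  let ?MS = "degree_msets m n r d" and ?rep = "marginal_rep m n r d"
  have "(\<Sum>M\<in>?MS. cscale (Poly_Mapping.lookup p (exps_of_mset M)) (mset_monom (?rep (marginals M)))) =
      (\<Sum>s\<in>marginals ` ?MS. \<Sum>M\<in>{M\<in>?MS. marginals M = s}.
         cscale (Poly_Mapping.lookup p (exps_of_mset M)) (mset_monom (?rep s)))"
    by (subst sum.image_gen[OF finite_degree_msets, where g = marginals]) (auto intro!: sum.cong)
  also have "\<dots> = (\<Sum>s\<in>marginals ` ?MS. cscale (marginal_coeff s p) (mset_monom (?rep s)))"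
  proof (rule sum.cong[OF refl])
    fix s
    have "p \<in> homog m n r d" using p by blast
    then show "(\<Sum>M\<in>{M\<in>?MS. marginals M = s}.
        cscale (Poly_Mapping.lookup p (exps_of_mset M)) (mset_monom (?rep s))) =
        cscale (marginal_coeff s p) (mset_monom (?rep s))"
      by (simp add: VS.scale_sum_left marginal_coeff_homog)
  qed
  also have "\<dots> = 0"
  proof -
    have "p \<in> Imnr m n r" using p by blast
    then show ?thesis by (simp add: marginal_coeff_Imnr)
  qed
  finally show ?thesis .
qed

lemma Imnr_homog_subset_span:
  "Imnr m n r \<inter> homog m n r d \<subseteq> VS.span (rep_diff m n r d ` non_reps m n r d :: 'a::field mpoly3 set)"
proof
  fix p :: "'a mpoly3" assume p: "p \<in> Imnr m n r \<inter> homog m n r d"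
  let ?c = "\<lambda>M. Poly_Mapping.lookup p (exps_of_mset M)"
  have "p = (\<Sum>M\<in>degree_msets m n r d. cscale (?c M) (mset_monom M))"
    using p by (intro sum_monoms_homog_eq[symmetric]) blast
  also have "\<dots> = (\<Sum>M\<in>degree_msets m n r d. cscale (?c M) (rep_diff m n r d M))"
    using sum_marginal_rep_monoms_Imnr[OF p]
    by (simp add: rep_diff_def VS.scale_right_diff_distrib sum_subtractf)
  also have "\<dots> \<in> VS.span (rep_diff m n r d ` non_reps m n r d)"
  proof (intro VS.span_sum VS.span_scale)
    fix M assume "M \<in> degree_msets m n r d"
    then show "rep_diff m n r d M \<in> VS.span (rep_diff m n r d ` non_reps m n r d)"
      by (cases "marginal_rep m n r d (marginals M) = M")
         (auto simp: rep_diff_def VS.span_zero intro: VS.span_base)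
  qed
  finally show "p \<in> VS.span (rep_diff m n r d ` non_reps m n r d)" .
qed

lemma card_non_reps:
  "card (non_reps m n r d) = card (degree_msets m n r d) - card (marginals ` degree_msets m n r d)"
proof -
  let ?MS = "degree_msets m n r d" and ?rep = "marginal_rep m n r d"
  have "non_reps m n r d = ?MS - ?rep ` marginals ` ?MS"
    using marginal_rep by force
  moreover have "?rep ` marginals ` ?MS \<subseteq> ?MS"
    using marginal_rep(1) by blast
  moreover have "inj_on ?rep (marginals ` ?MS)"
    by (intro inj_onI) (metis imageE marginal_rep(2))
  ultimately show ?thesis
    by (simp add: card_Diff_subset finite_degree_msets finite_subset card_image)
qed

lemma dim_Imnr_homog:
  "VS.dim (Imnr m n r \<inter> homog m n r d :: 'a::field mpoly3 set) =
     card (degree_msets m n r d) - card (marginals ` degree_msets m n r d)"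
proof -
  let ?B = "rep_diff m n r d ` non_reps m n r d :: 'a mpoly3 set"
  have "?B \<subseteq> Imnr m n r \<inter> homog m n r d"
    using rep_diff_in_Imnr_homog by blast
  moreover have "card ?B = card (non_reps m n r d)"
    by (intro card_image inj_onI) (metis (no_types, lifting) lookup_rep_diff mem_Collect_eq one_neq_zero)
  ultimately show ?thesis
    using VS.dim_unique[OF _ Imnr_homog_subset_span independent_rep_diffs] card_non_reps by simp
qed

lemma marginals_mset_zip:
  assumes "length xs = length ys" "length ys = length zs"
  shows "marginals (mset (zip xs (zip ys zs))) = (mset xs, mset ys, mset zs)"
proof -
  have "map (fst \<circ> snd) (zip xs (zip ys zs)) = ys" "map (snd \<circ> snd) (zip xs (zip ys zs)) = zs"
    using assms by (simp_all flip: map_map)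
  then show ?thesis
    using assms by (simp add: marginals_def flip: mset_map)
qed

lemma marginals_degree_msets:
  "marginals ` degree_msets m n r d =
     multisets_of_size {1..m} d \<times> multisets_of_size {1..n} d \<times> multisets_of_size {1..r} d"
proof
  show "marginals ` degree_msets m n r d \<subseteq>
      multisets_of_size {1..m} d \<times> multisets_of_size {1..n} d \<times> multisets_of_size {1..r} d"
    by (auto simp: marginals_def multisets_of_size_def vars3_def subset_iff)
  show "multisets_of_size {1..m} d \<times> multisets_of_size {1..n} d \<times> multisets_of_size {1..r} d \<subseteq>
      marginals ` degree_msets m n r d"
  proof clarify
    fix A B C assume ABC: "A \<in> multisets_of_size {1..m} d" "B \<in> multisets_of_size {1..n} d"
      "C \<in> multisets_of_size {1..r} d"
    let ?xs = "sorted_list_of_multiset A" and ?ys = "sorted_list_of_multiset B"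
      and ?zs = "sorted_list_of_multiset C"
    define M where "M = mset (zip ?xs (zip ?ys ?zs))"
    have len: "length ?xs = d" "length ?ys = d" "length ?zs = d"
      using ABC by (simp_all add: multisets_of_size_def flip: size_mset)
    then have "marginals M = (A, B, C)"
      unfolding M_def by (subst marginals_mset_zip) simp_all
    moreover have "set_mset M \<subseteq> vars3 m n r"
    proof
      fix t assume "t \<in># M"
      then obtain x y z where "t = (x, y, z)" "x \<in> set ?xs" "y \<in> set ?ys" "z \<in> set ?zs"
        unfolding M_def by (metis in_set_zipE prod.exhaust set_mset_mset)
      then show "t \<in> vars3 m n r"
        using ABC by (auto simp: multisets_of_size_def vars3_def)
    qed
    then have "M \<in> degree_msets m n r d"
      using len by (simp add: M_def multisets_of_size_def)
    ultimately show "(A, B, C) \<in> marginals ` degree_msets m n r d" by (metis image_eqI)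
  qed
qed

lemma hilb_fun_eq_prod_choose:
  "hilb_fun TYPE('a::field) m n r d = ((m + d - 1) choose d) * ((n + d - 1) choose d) * ((r + d - 1) choose d)"
proof -
  have "hilb_fun TYPE('a) m n r d = card (degree_msets m n r d) -
      (card (degree_msets m n r d) - card (marginals ` degree_msets m n r d))"
    by (simp add: hilb_fun_def dim_homog dim_Imnr_homog)
  also have "\<dots> = card (marginals ` degree_msets m n r d)"
    using card_image_le[OF finite_degree_msets, of marginals m n r d] by simp
  finally show ?thesis
    by (simp add: marginals_degree_msets card_cartesian_product card_multisets_of_size)
qed

section \<open>The \<open>h\<close>-polynomial\<close>

lemma des_le:
  assumes "bij_betw w {1..N} {1..N}"
  shows "des N w \<le> N"
proof -
  have "des N w \<le> card {1..<N}"
    unfolding des_eq_card_descent_set by (intro card_mono descent_set_subset[OF assms]) simp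
  then show ?thesis by simp
qed

lemma lin_ext_eq_linear_extensions:
  "lin_ext m n r \<phi> = linear_extensions (m + n + r - 3) (\<lambda>i j. chains_le (\<phi> i) (\<phi> j))"
  by (simp add: lin_ext_def linear_extensions_def)

lemma hilb_fun_eq_sum_lin_ext:
  assumes "m \<ge> 1" "n \<ge> 1" "r \<ge> 1" and labeling: "natural_labeling m n r \<phi>"
  defines "N \<equiv> m + n + r - 3"
  shows "hilb_fun TYPE('a::field) m n r d = (\<Sum>w\<in>lin_ext m n r \<phi>. (d + N - des N w) choose N)"
proof -
  have "(k + d - 1) choose d = (d + (k - 1)) choose (k - 1)" if "k \<ge> 1" for k
    using that binomial_symmetric[of d "d + (k - 1)"] by (simp add: add.commute)
  then have "hilb_fun TYPE('a) m n r d = (\<Prod>c<3. (d + chain_sizes m n r c) choose chain_sizes m n r c)"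
    using assms(1-3) by (simp add: hilb_fun_eq_prod_choose numeral_3_eq_3 lessThan_Suc chain_sizes_def)
  also have "\<dots> = card (order_preserving_maps {1..N} (\<lambda>i j. chains_le (\<phi> i) (\<phi> j)) d)"
    unfolding N_def by (rule card_order_preserving_maps_natural_labeling[OF labeling, symmetric])
  also have "\<dots> = (\<Sum>w\<in>lin_ext m n r \<phi>. (d + N - des N w) choose N)"
    using labeling unfolding lin_ext_eq_linear_extensions N_def natural_labeling_def
    by (intro card_order_preserving_maps) blast
  finally show ?thesis .
qed

theorem corollary4p5:
  fixes m n r :: nat and \<phi> :: "nat \<Rightarrow> nat \<times> nat"
  assumes "m \<ge> 1" and "n \<ge> 1" and "r \<ge> 1"
    and "natural_labeling m n r \<phi>"
  shows "\<exists>D::nat. hilb_series (TYPE('a::field)) m n r * (1 - fps_X) ^ D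
           = fps_of_poly (\<Sum>w\<in>lin_ext m n r \<phi>. monom (1::int) (des (m + n + r - 3) w))"
proof -
  define N where "N = m + n + r - 3"
  have "\<forall>w\<in>lin_ext m n r \<phi>. des N w \<le> N"
    by (auto intro: des_le simp: lin_ext_def N_def)
  moreover have "hilb_series TYPE('a) m n r =
      Abs_fps (\<lambda>d. \<Sum>w\<in>lin_ext m n r \<phi>. int ((d + N - des N w) choose N))"
    by (simp add: hilb_series_def hilb_fun_eq_sum_lin_ext[OF assms] N_def)
  ultimately have "hilb_series TYPE('a) m n r * (1 - fps_X) ^ Suc N = (\<Sum>w\<in>lin_ext m n r \<phi>. fps_X ^ des N w)"
    by (simp add: fps_sum_shifted_choose_mult_one_minus_X_power del: power_Suc)
  also have "\<dots> = fps_of_poly (\<Sum>w\<in>lin_ext m n r \<phi>. monom 1 (des N w))"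
    by (simp add: fps_of_poly_sum fps_of_poly_monom')
  finally show ?thesis
    unfolding N_def by blast
qed

end
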